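(* Let $L$ be a library and $(\tau,\rho)\in[\![L]\!]$. Then there is a good client $C$ compatible with $L$ such that $(\tau,\rho')\in[\![C]\!]$ for some configuration $\rho'$.
   Context: Language HOLiB. Types: $\theta ::= \mathtt{unit}\mid\mathtt{int}\mid\theta\times\theta\mid\theta\to\theta$. There are countably infinite pairwise disjoint typed sets of method names $\mathsf{Meths}=\biguplus_{\theta,\theta'}\mathsf{Meths}_{\theta,\theta'}$, global reference names $\mathsf{Refs}=\biguplus_{\theta\text{ not a product}}\mathsf{Refs}_\theta$ and variables $\mathsf{Vars}=\biguplus_\theta\mathsf{Vars}_\theta$ (ranged over by $m,r,x$); $i$ ranges over integers, $\oplus$ over a fixed set of binary integer operations. Terms: $M ::= m\mid i\mid ()\mid x\mid \lambda x.M\mid r:=M\mid {!r}\mid M\oplus M\mid \langle M,M\rangle\mid \pi_1M\mid\pi_2M\mid MM\mid \mathtt{if}\ M\ \mathtt{then}\ M\ \mathtt{else}\ M\mid \mathtt{letrec}\ x=\lambda x.M\ \mathtt{in}\ M\mid \mathtt{let}\ x=M\ \mathtt{in}\ M\mid \mathtt{assert}(M)\mid [\![M]\!]$, where $[\![M]\!]$ is a runtime "evaluation box"; terms are typed in the standard way ($m:\theta\to\theta'$ for $m\in\mathsf{Meths}_{\theta,\theta'}$; ${!r}:\theta$ and $r:=M:\mathtt{unit}$ for $r\in\mathsf{Refs}_\theta$, $M:\theta$; conditions, $\oplus$-operands and assert arguments have type int; $\mathtt{assert}(M):\mathtt{unit}$). Libraries: $L ::= B\mid \mathtt{abstract}\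 m; L$; blocks $B ::= \varepsilon\mid \mathtt{public}\ m=\lambda x.M;B\mid m=\lambda x.M;B\mid \mathtt{ref}\ r:=i;B\mid\mathtt{ref}\ r:=\lambda x.M;B$; each non-abstract method and each reference is defined once with matching types, abstract/public/private methods are disjoint, and only defined or abstract names are mentioned. A client is $C = L;\ \mathtt{main}=M$ with $M:\mathtt{unit}$. A client is good if it contains no assertions. Values $v ::= m\mid i\mid ()\mid\langle v,v\rangle$; evaluation contexts $E ::= \bullet\mid \mathtt{assert}(E)\mid r:=E\mid E\oplus M\mid v\oplus E\mid \langle E,M\rangle\mid\langle v,E\rangle\mid \pi_jE\mid mE\mid \mathtt{let}\ x=E\ \mathtt{in}\ M\mid \mathtt{if}\ E\ \mathtt{then}\ M\ \mathtt{else}\ M\mid [\![E]\!]$. A repository $R$ is a finite partial map from method names to terms $\lambda x.M$; a store $S$ is a finite partial map from references to values; $k\in\mathbb{N}$ is the call-depth counter. Reduction $(E[\cdot],R,S,k)\to(E[\cdot],R',S',k')$: $\mathtt{let}\ x=v\ \mathtt{in}\ M\mapsto M\{v/x\}$; $\pi_j\langle v_1,v_2\rangle\mapsto v_j$; $r:=v\mapsto()$ with $S[r\mapsto v]$; ${!r}\mapsto S(r)$; $\mathtt{if}\ i\ \mathtt{then}\ M_1\ \mathtt{else}\ M_0\mapsto M_1$ if $i\neq0$, $M_0$ if $i=0$; $i_1\oplus i_2\mapsto$ the integer $i_1\oplus i_2$; $\lambda x.M\mapsto m$ with $R\uplus\{m\mapsto\lambda x.M\}$, $m$ fresh; $\mathtt{assert}(i)\mapsto()$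 if $i\ne0$ (no rule for $\mathtt{assert}(0)$); $mv\mapsto[\![M\{v/x\}]\!]$ with $k+1$ if $R(m)=\lambda x.M$; $[\![v]\!]\mapsto v$ with $k+1$ replaced by $k$; $\mathtt{letrec}\ f=\lambda x.M\ \mathtt{in}\ M'\mapsto M'\{m/f\}$ with $R\uplus\{m\mapsto\lambda x.M\{m/f\}\}$, $m$ fresh. Building: $L$ builds to $(\varepsilon,R,S,\mathcal P,\mathcal A)$ if $(L,\emptyset,\emptyset,\emptyset,\emptyset)$ reaches it by processing declarations left to right: $\mathtt{abstract}\ m$ adds $m$ to $\mathcal A$; $\mathtt{public}\ m=\lambda x.M$ adds $m\mapsto\lambda x.M$ to $R$ and $m$ to $\mathcal P$; $m=\lambda x.M$ adds $m\mapsto\lambda x.M$ to $R$; $\mathtt{ref}\ r:=i$ adds $r\mapsto i$ to $S$; $\mathtt{ref}\ r:=\lambda x.M$ adds $m\mapsto\lambda x.M$ to $R$ and $r\mapsto m$ to $S$ for fresh $m$. Client $L;\mathtt{main}=M$ builds to $(M,R,S,\mathcal P,\mathcal A)$ when $L$ builds to $(\varepsilon,R,S,\mathcal P,\mathcal A)$. Trace semantics: evaluation stacks $\mathcal E ::= \varepsilon\mid (m,E)::\mathcal E\mid (m,l)::\mathcal E$ ($l\in\mathbb N$). $P$-configurations $(\mathcal E,M,R,S,\mathcal P,\mathcal A,k)_p$ and $O$-configurations $(\mathcal E,l,R,S,\mathcal P,\mathcal A,k)_o$, with $\mathcal P,\mathcal A\subseteq\mathsf{Meths}$ (public and abstract names).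 Transitions: (INT) $(\mathcal E,M,R,S,\mathcal P,\mathcal A,k)_p\to(\mathcal E,M',R',S',\mathcal P,\mathcal A,k')_p$ whenever $(M,R,S,k)\to(M',R',S',k')$; (PQ) $(\mathcal E,E[mv],R,S,\mathcal P,\mathcal A,k)_p\xrightarrow{\mathtt{call}(m,v)}((m,E)::\mathcal E,0,R,S,\mathcal P',\mathcal A,k)_o$ with $m\in\mathcal A$; (OQ) $(\mathcal E,l,R,S,\mathcal P,\mathcal A,k)_o\xrightarrow{\mathtt{call}(m,v)}((m,l+1)::\mathcal E,mv,R,S,\mathcal P,\mathcal A',k)_p$ with $m\in\mathcal P$ and $R(m)$ defined; (PA) $((m,l)::\mathcal E,v,R,S,\mathcal P,\mathcal A,k)_p\xrightarrow{\mathtt{ret}(m,v)}(\mathcal E,l,R,S,\mathcal P',\mathcal A,k)_o$; (OA) $((m,E)::\mathcal E,l,R,S,\mathcal P,\mathcal A,k)_o\xrightarrow{\mathtt{ret}(m,v)}(\mathcal E,E[v],R,S,\mathcal P,\mathcal A',k)_p$. In $P$-moves $\mathcal P'=\mathcal P\cup(\mathsf{Meths}(v)\cap\mathrm{dom}(R))$; in $O$-moves $v$ is any value of the expected type and $\mathcal A'=\mathcal A\cup(\mathsf{Meths}(v)\setminus\mathrm{dom}(R))$, where $\mathsf{Meths}(v)$ is the set of method names in $v$. Semantics: $[\![L]\!]=\{(\tau,\rho)\mid L\text{ builds to }(\varepsilon,R,S,\mathcal P,\mathcal A)\text{ and }(\varepsilon,0,R,S,\mathcal P,\mathcal A,0)_o\xrightarrow{\tau}{}^{*}\rho\}$,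 and for a client $C$, $[\![C]\!]=\{(\tau,\rho)\mid C\text{ builds to }(M,R,S,\mathcal P,\mathcal A)\text{ and }(\varepsilon,M,R,S,\mathcal P,\mathcal A,0)_p\xrightarrow{\tau}{}^{*}\rho\}$, where $\tau$ is the sequence of move labels $\mathtt{call}(m,v)$/$\mathtt{ret}(m,v)$. Compatibility: $L$ and $C$ are compatible if $L$ builds to $(\varepsilon,R,S,\mathcal P,\mathcal A)$, $C$ builds to $(M,R',S',\mathcal P',\mathcal A')$, $\mathcal P=\mathcal A'$, $\mathcal A=\mathcal P'$, $\mathrm{dom}(S)\cap\mathrm{dom}(S')=\emptyset$ and $\mathrm{dom}(R)\cap\mathrm{dom}(R')=\emptyset$. *)

theory Defs
  imports Main
begin

section \<open>Syntax of HOLiB\<close>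

datatype ty = TUnit | TInt | TProd ty ty | TArrow ty ty

text \<open>Typed names: a name carries its type, so each typed name set is countably infinite
  and the typed sets are pairwise disjoint.  \<open>Meth n a b\<close> is in Meths_{a,b};
  \<open>Ref n t\<close> is a reference name of type t (only non-product t are legitimate
  references); \<open>Var n t\<close> is a variable of type t.\<close>
datatype meth = Meth nat ty ty
datatype ref = Ref nat ty
datatype var = Var nat ty

fun argty :: "meth \<Rightarrow> ty" where "argty (Meth n a b) = a"
fun resty :: "meth \<Rightarrow> ty" where "resty (Meth n a b) = b"
fun refty :: "ref \<Rightarrow> ty" where "refty (Ref n t) = t"
fun varty :: "var \<Rightarrow> ty" where "varty (Var n t) = t"

fun is_prod :: "ty \<Rightarrow> bool" where
  "is_prod (TProd a b) = True"
| "is_prod _ = False"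

datatype binop = Plus | Minus | Times | Equal | Less

fun opsem :: "binop \<Rightarrow> int \<Rightarrow> int \<Rightarrow> int" where
  "opsem Plus i j = i + j"
| "opsem Minus i j = i - j"
| "opsem Times i j = i * j"
| "opsem Equal i j = (if i = j then 1 else 0)"
| "opsem Less i j = (if i < j then 1 else 0)"

datatype tm =
    MethT meth
  | IntT int
  | UnitT
  | VarT var
  | Lam var tm
  | Assign ref tm
  | Deref ref
  | BinOp binop tm tm
  | Pair tm tm
  | Fst tm
  | Snd tm
  | App tm tm
  | If tm tm tm
  | Letrec var var tm tm   (* letrec f = \<lambda>x. M in N *)
  | Let var tm tm
  | Assert tm
  | Box tm

inductive wt :: "tm \<Rightarrow> ty \<Rightarrow> bool" where
  wt_meth: "wt (MethT m) (TArrow (argty m) (resty m))"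
| wt_int: "wt (IntT i) TInt"
| wt_unit: "wt UnitT TUnit"
| wt_var: "wt (VarT x) (varty x)"
| wt_lam: "wt M b \<Longrightarrow> wt (Lam x M) (TArrow (varty x) b)"
| wt_assign: "\<not> is_prod (refty r) \<Longrightarrow> wt M (refty r) \<Longrightarrow> wt (Assign r M) TUnit"
| wt_deref: "\<not> is_prod (refty r) \<Longrightarrow> wt (Deref r) (refty r)"
| wt_op: "wt M TInt \<Longrightarrow> wt N TInt \<Longrightarrow> wt (BinOp op M N) TInt"
| wt_pair: "wt M a \<Longrightarrow> wt N b \<Longrightarrow> wt (Pair M N) (TProd a b)"
| wt_fst: "wt M (TProd a b) \<Longrightarrow> wt (Fst M) a"
| wt_snd: "wt M (TProd a b) \<Longrightarrow> wt (Snd M) b"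
| wt_app: "wt M (TArrow a b) \<Longrightarrow> wt N a \<Longrightarrow> wt (App M N) b"
| wt_if: "wt M TInt \<Longrightarrow> wt N1 t \<Longrightarrow> wt N0 t \<Longrightarrow> wt (If M N1 N0) t"
| wt_letrec: "varty f = TArrow (varty x) b \<Longrightarrow> wt M b \<Longrightarrow> wt N c \<Longrightarrow> wt (Letrec f x M N) c"
| wt_let: "wt M (varty x) \<Longrightarrow> wt N c \<Longrightarrow> wt (Let x M N) c"
| wt_assert: "wt M TInt \<Longrightarrow> wt (Assert M) TUnit"
| wt_box: "wt M t \<Longrightarrow> wt (Box M) t"

fun fv :: "tm \<Rightarrow> var set" where
  "fv (MethT m) = {}"
| "fv (IntT i) = {}"
| "fv UnitT = {}"
| "fv (VarT x) = {x}"
| "fv (Lam x M) = fv M - {x}"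
| "fv (Assign r M) = fv M"
| "fv (Deref r) = {}"
| "fv (BinOp op M N) = fv M \<union> fv N"
| "fv (Pair M N) = fv M \<union> fv N"
| "fv (Fst M) = fv M"
| "fv (Snd M) = fv M"
| "fv (App M N) = fv M \<union> fv N"
| "fv (If M N1 N0) = fv M \<union> fv N1 \<union> fv N0"
| "fv (Letrec f x M N) = (fv M - {f, x}) \<union> (fv N - {f})"
| "fv (Let x M N) = fv M \<union> (fv N - {x})"
| "fv (Assert M) = fv M"
| "fv (Box M) = fv M"

fun meths :: "tm \<Rightarrow> meth set" where
  "meths (MethT m) = {m}"
| "meths (IntT i) = {}"
| "meths UnitT = {}"
| "meths (VarT x) = {}"
| "meths (Lam x M) = meths M"
| "meths (Assign r M) = meths M"
| "meths (Deref r) = {}"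
| "meths (BinOp op M N) = meths M \<union> meths N"
| "meths (Pair M N) = meths M \<union> meths N"
| "meths (Fst M) = meths M"
| "meths (Snd M) = meths M"
| "meths (App M N) = meths M \<union> meths N"
| "meths (If M N1 N0) = meths M \<union> meths N1 \<union> meths N0"
| "meths (Letrec f x M N) = meths M \<union> meths N"
| "meths (Let x M N) = meths M \<union> meths N"
| "meths (Assert M) = meths M"
| "meths (Box M) = meths M"

fun refs :: "tm \<Rightarrow> ref set" where
  "refs (MethT m) = {}"
| "refs (IntT i) = {}"
| "refs UnitT = {}"
| "refs (VarT x) = {}"
| "refs (Lam x M) = refs M"
| "refs (Assign r M) = insert r (refs M)"
| "refs (Deref r) = {r}"
| "refs (BinOp op M N) = refs M \<union> refs N"
| "refs (Pair M N) = refs M \<union> refs N"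
| "refs (Fst M) = refs M"
| "refs (Snd M) = refs M"
| "refs (App M N) = refs M \<union> refs N"
| "refs (If M N1 N0) = refs M \<union> refs N1 \<union> refs N0"
| "refs (Letrec f x M N) = refs M \<union> refs N"
| "refs (Let x M N) = refs M \<union> refs N"
| "refs (Assert M) = refs M"
| "refs (Box M) = refs M"

fun has_assert :: "tm \<Rightarrow> bool" where
  "has_assert (Lam x M) = has_assert M"
| "has_assert (Assign r M) = has_assert M"
| "has_assert (BinOp op M N) = (has_assert M \<or> has_assert N)"
| "has_assert (Pair M N) = (has_assert M \<or> has_assert N)"
| "has_assert (Fst M) = has_assert M"
| "has_assert (Snd M) = has_assert M"
| "has_assert (App M N) = (has_assert M \<or> has_assert N)"
| "has_assert (If M N1 N0) = (has_assert M \<or> has_assert N1 \<or> has_assert N0)"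
| "has_assert (Letrec f x M N) = (has_assert M \<or> has_assert N)"
| "has_assert (Let x M N) = (has_assert M \<or> has_assert N)"
| "has_assert (Assert M) = True"
| "has_assert (Box M) = has_assert M"
| "has_assert _ = False"

fun has_box :: "tm \<Rightarrow> bool" where
  "has_box (Lam x M) = has_box M"
| "has_box (Assign r M) = has_box M"
| "has_box (BinOp op M N) = (has_box M \<or> has_box N)"
| "has_box (Pair M N) = (has_box M \<or> has_box N)"
| "has_box (Fst M) = has_box M"
| "has_box (Snd M) = has_box M"
| "has_box (App M N) = (has_box M \<or> has_box N)"
| "has_box (If M N1 N0) = (has_box M \<or> has_box N1 \<or> has_box N0)"
| "has_box (Letrec f x M N) = (has_box M \<or> has_box N)"
| "has_box (Let x M N) = (has_box M \<or> has_box N)"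
| "has_box (Assert M) = has_box M"
| "has_box (Box M) = True"
| "has_box _ = False"

text \<open>Substitution of a (closed) value for a variable; values are closed, so no capture
  can occur.\<close>
fun subst :: "var \<Rightarrow> tm \<Rightarrow> tm \<Rightarrow> tm" where
  "subst x v (MethT m) = MethT m"
| "subst x v (IntT i) = IntT i"
| "subst x v UnitT = UnitT"
| "subst x v (VarT y) = (if y = x then v else VarT y)"
| "subst x v (Lam y M) = (if y = x then Lam y M else Lam y (subst x v M))"
| "subst x v (Assign r M) = Assign r (subst x v M)"
| "subst x v (Deref r) = Deref r"
| "subst x v (BinOp op M N) = BinOp op (subst x v M) (subst x v N)"
| "subst x v (Pair M N) = Pair (subst x v M) (subst x v N)"
| "subst x v (Fst M) = Fst (subst x v M)"
| "subst x v (Snd M) = Snd (subst x v M)"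
| "subst x v (App M N) = App (subst x v M) (subst x v N)"
| "subst x v (If M N1 N0) = If (subst x v M) (subst x v N1) (subst x v N0)"
| "subst x v (Letrec f y M N) =
     Letrec f y (if x = f \<or> x = y then M else subst x v M) (if x = f then N else subst x v N)"
| "subst x v (Let y M N) = Let y (subst x v M) (if x = y then N else subst x v N)"
| "subst x v (Assert M) = Assert (subst x v M)"
| "subst x v (Box M) = Box (subst x v M)"

fun is_val :: "tm \<Rightarrow> bool" where
  "is_val (MethT m) = True"
| "is_val (IntT i) = True"
| "is_val UnitT = True"
| "is_val (Pair v w) = (is_val v \<and> is_val w)"
| "is_val _ = False"

section \<open>Evaluation contexts and reduction\<close>

datatype ectx =
    Hole
  | EAssert ectx
  | EAssign ref ectx
  | EOpL binop ectx tm
  | EOpR binop tm ectx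
  | EPairL ectx tm
  | EPairR tm ectx
  | EFst ectx
  | ESnd ectx
  | EApp meth ectx
  | ELet var ectx tm
  | EIf ectx tm tm
  | EBox ectx

fun fill :: "ectx \<Rightarrow> tm \<Rightarrow> tm" where
  "fill Hole t = t"
| "fill (EAssert E) t = Assert (fill E t)"
| "fill (EAssign r E) t = Assign r (fill E t)"
| "fill (EOpL op E N) t = BinOp op (fill E t) N"
| "fill (EOpR op v E) t = BinOp op v (fill E t)"
| "fill (EPairL E N) t = Pair (fill E t) N"
| "fill (EPairR v E) t = Pair v (fill E t)"
| "fill (EFst E) t = Fst (fill E t)"
| "fill (ESnd E) t = Snd (fill E t)"
| "fill (EApp m E) t = App (MethT m) (fill E t)"
| "fill (ELet x E N) t = Let x (fill E t) N"
| "fill (EIf E N1 N0) t = If (fill E t) N1 N0"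
| "fill (EBox E) t = Box (fill E t)"

fun ectx_ok :: "ectx \<Rightarrow> bool" where
  "ectx_ok Hole = True"
| "ectx_ok (EAssert E) = ectx_ok E"
| "ectx_ok (EAssign r E) = ectx_ok E"
| "ectx_ok (EOpL op E N) = ectx_ok E"
| "ectx_ok (EOpR op v E) = (is_val v \<and> ectx_ok E)"
| "ectx_ok (EPairL E N) = ectx_ok E"
| "ectx_ok (EPairR v E) = (is_val v \<and> ectx_ok E)"
| "ectx_ok (EFst E) = ectx_ok E"
| "ectx_ok (ESnd E) = ectx_ok E"
| "ectx_ok (EApp m E) = ectx_ok E"
| "ectx_ok (ELet x E N) = ectx_ok E"
| "ectx_ok (EIf E N1 N0) = ectx_ok E"
| "ectx_ok (EBox E) = ectx_ok E"

type_synonym repo = "meth \<rightharpoonup> var \<times> tm"   (* m \<mapsto> \<lambda>x.M is stored as (x, M) *)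
type_synonym store = "ref \<rightharpoonup> tm"

text \<open>Redex contraction.  The set \<open>X\<close> collects the names that a freshly generated method
  name must avoid in addition to \<open>dom R\<close>.\<close>
inductive head :: "meth set \<Rightarrow> tm \<times> repo \<times> store \<times> nat \<Rightarrow> tm \<times> repo \<times> store \<times> nat \<Rightarrow> bool" where
  h_let: "is_val v \<Longrightarrow> head X (Let x v M, R, S, k) (subst x v M, R, S, k)"
| h_fst: "is_val v1 \<Longrightarrow> is_val v2 \<Longrightarrow> head X (Fst (Pair v1 v2), R, S, k) (v1, R, S, k)"
| h_snd: "is_val v1 \<Longrightarrow> is_val v2 \<Longrightarrow> head X (Snd (Pair v1 v2), R, S, k) (v2, R, S, k)"
| h_assign: "is_val v \<Longrightarrow> head X (Assign r v, R, S, k) (UnitT, R, S(r \<mapsto> v), k)"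
| h_deref: "S r = Some v \<Longrightarrow> head X (Deref r, R, S, k) (v, R, S, k)"
| h_if1: "i \<noteq> 0 \<Longrightarrow> head X (If (IntT i) M1 M0, R, S, k) (M1, R, S, k)"
| h_if0: "head X (If (IntT 0) M1 M0, R, S, k) (M0, R, S, k)"
| h_op: "head X (BinOp op (IntT i1) (IntT i2), R, S, k) (IntT (opsem op i1 i2), R, S, k)"
| h_lam: "wt (Lam x M) (TArrow (argty m) (resty m)) \<Longrightarrow> m \<notin> dom R \<Longrightarrow> m \<notin> X \<Longrightarrow>
          head X (Lam x M, R, S, k) (MethT m, R(m \<mapsto> (x, M)), S, k)"
| h_assert: "i \<noteq> 0 \<Longrightarrow> head X (Assert (IntT i), R, S, k) (UnitT, R, S, k)"
| h_call: "R m = Some (x, M) \<Longrightarrow> is_val v \<Longrightarrow>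
          head X (App (MethT m) v, R, S, k) (Box (subst x v M), R, S, Suc k)"
| h_box: "is_val v \<Longrightarrow> head X (Box v, R, S, Suc k) (v, R, S, k)"
| h_letrec: "varty f = TArrow (argty m) (resty m) \<Longrightarrow> m \<notin> dom R \<Longrightarrow> m \<notin> X \<Longrightarrow>
          head X (Letrec f x M N, R, S, k)
             (subst f (MethT m) N, R(m \<mapsto> (x, if x = f then M else subst f (MethT m) M)), S, k)"

inductive red :: "meth set \<Rightarrow> tm \<times> repo \<times> store \<times> nat \<Rightarrow> tm \<times> repo \<times> store \<times> nat \<Rightarrow> bool" where
  red_ctx: "ectx_ok E \<Longrightarrow> head X (M, R, S, k) (M', R', S', k') \<Longrightarrow>
            red X (fill E M, R, S, k) (fill E M', R', S', k')"

section \<open>Trace semantics\<close>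

datatype frame = FCtx meth ectx | FNum meth nat

fun frame_meths :: "frame \<Rightarrow> meth set" where
  "frame_meths (FCtx m E) = insert m (meths (fill E UnitT))"
| "frame_meths (FNum m l) = {m}"

text \<open>P-configurations \<open>PC stack M R S Pub Abs k\<close> and O-configurations \<open>OC stack l R S Pub Abs k\<close>.\<close>
datatype config =
    PC "frame list" tm repo store "meth set" "meth set" nat
  | OC "frame list" nat repo store "meth set" "meth set" nat

datatype move = Call meth tm | Ret meth tm

text \<open>Names a freshly created method name must avoid in a P-configuration (besides dom R).\<close>
definition used_names :: "frame list \<Rightarrow> tm \<Rightarrow> repo \<Rightarrow> store \<Rightarrow> meth set \<Rightarrow> meth set \<Rightarrow> meth set" where
  "used_names Es M R S P A =
     A \<union> P \<union> meths M \<union> \<Union> (meths ` ran S) \<union> \<Union> ((\<lambda>(x, N). meths N) ` ran R)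
       \<union> \<Union> (frame_meths ` set Es)"

text \<open>Opponent values: any value of the expected type; names in it that are already in the
  repository must be public (the opponent cannot know private names).\<close>
definition o_val :: "repo \<Rightarrow> meth set \<Rightarrow> tm \<Rightarrow> ty \<Rightarrow> bool" where
  "o_val R P v t \<longleftrightarrow> is_val v \<and> wt v t \<and> meths v \<inter> dom R \<subseteq> P"

inductive cstep :: "config \<Rightarrow> move option \<Rightarrow> config \<Rightarrow> bool" where
  c_int: "red (used_names Es M R S P A) (M, R, S, k) (M', R', S', k') \<Longrightarrow>
          cstep (PC Es M R S P A k) None (PC Es M' R' S' P A k')"
| c_pq: "ectx_ok E \<Longrightarrow> is_val v \<Longrightarrow> m \<in> A \<Longrightarrow>
          cstep (PC Es (fill E (App (MethT m) v)) R S P A k) (Some (Call m v))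
                (OC (FCtx m E # Es) 0 R S (P \<union> (meths v \<inter> dom R)) A k)"
| c_oq: "m \<in> P \<Longrightarrow> R m \<noteq> None \<Longrightarrow> o_val R P v (argty m) \<Longrightarrow>
          cstep (OC Es l R S P A k) (Some (Call m v))
                (PC (FNum m (l + 1) # Es) (App (MethT m) v) R S P (A \<union> (meths v - dom R)) k)"
| c_pa: "is_val v \<Longrightarrow>
          cstep (PC (FNum m l # Es) v R S P A k) (Some (Ret m v))
                (OC Es l R S (P \<union> (meths v \<inter> dom R)) A k)"
| c_oa: "o_val R P v (resty m) \<Longrightarrow>
          cstep (OC (FCtx m E # Es) l R S P A k) (Some (Ret m v))
                (PC Es (fill E v) R S P (A \<union> (meths v - dom R)) k)"

inductive ctrace :: "config \<Rightarrow> move list \<Rightarrow> config \<Rightarrow> bool" where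
  ct_refl: "ctrace c [] c"
| ct_int: "cstep c None c' \<Longrightarrow> ctrace c' t c'' \<Longrightarrow> ctrace c t c''"
| ct_mv: "cstep c (Some a) c' \<Longrightarrow> ctrace c' t c'' \<Longrightarrow> ctrace c (a # t) c''"

section \<open>Libraries and clients\<close>

datatype decl =
    Abstract meth
  | PublicM meth var tm
  | PrivM meth var tm
  | RefInt ref int
  | RefLam ref var tm

type_synonym library = "decl list"
type_synonym client = "decl list \<times> tm"   (* L; main = M *)

fun is_abstract :: "decl \<Rightarrow> bool" where
  "is_abstract (Abstract m) = True"
| "is_abstract _ = False"

fun decl_terms :: "decl \<Rightarrow> tm list" where
  "decl_terms (Abstract m) = []"
| "decl_terms (PublicM m x M) = [Lam x M]"
| "decl_terms (PrivM m x M) = [Lam x M]"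
| "decl_terms (RefInt r i) = []"
| "decl_terms (RefLam r x M) = [Lam x M]"

fun decl_meth :: "decl \<Rightarrow> meth list" where
  "decl_meth (PublicM m x M) = [m]"
| "decl_meth (PrivM m x M) = [m]"
| "decl_meth _ = []"

fun decl_pub :: "decl \<Rightarrow> meth list" where
  "decl_pub (PublicM m x M) = [m]"
| "decl_pub _ = []"

fun decl_abs :: "decl \<Rightarrow> meth list" where
  "decl_abs (Abstract m) = [m]"
| "decl_abs _ = []"

fun decl_ref :: "decl \<Rightarrow> ref list" where
  "decl_ref (RefInt r i) = [r]"
| "decl_ref (RefLam r x M) = [r]"
| "decl_ref _ = []"

fun decl_typed :: "decl \<Rightarrow> bool" where
  "decl_typed (Abstract m) = True"
| "decl_typed (PublicM m x M) = wt (Lam x M) (TArrow (argty m) (resty m))"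
| "decl_typed (PrivM m x M) = wt (Lam x M) (TArrow (argty m) (resty m))"
| "decl_typed (RefInt r i) = (refty r = TInt)"
| "decl_typed (RefLam r x M) = wt (Lam x M) (refty r)"

definition lib_terms :: "decl list \<Rightarrow> tm list" where
  "lib_terms L = concat (map decl_terms L)"

definition defined_meths :: "decl list \<Rightarrow> meth list" where
  "defined_meths L = concat (map decl_meth L)"

definition abstract_meths :: "decl list \<Rightarrow> meth list" where
  "abstract_meths L = concat (map decl_abs L)"

definition defined_refs :: "decl list \<Rightarrow> ref list" where
  "defined_refs L = concat (map decl_ref L)"

text \<open>Source terms: typed (via \<open>decl_typed\<close>), closed, free of runtime evaluation boxes.\<close>
definition source_term :: "tm \<Rightarrow> bool" where
  "source_term M \<longleftrightarrow> fv M = {} \<and> \<not> has_box M"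

definition wf_library :: "library \<Rightarrow> bool" where
  "wf_library L \<longleftrightarrow>
     (\<exists>ms B. L = map Abstract ms @ B \<and> (\<forall>d \<in> set B. \<not> is_abstract d))
   \<and> distinct (defined_meths L)
   \<and> distinct (defined_refs L)
   \<and> set (abstract_meths L) \<inter> set (defined_meths L) = {}
   \<and> (\<forall>d \<in> set L. decl_typed d)
   \<and> (\<forall>r \<in> set (defined_refs L). \<not> is_prod (refty r))
   \<and> (\<forall>M \<in> set (lib_terms L). source_term M
          \<and> meths M \<subseteq> set (defined_meths L) \<union> set (abstract_meths L)
          \<and> refs M \<subseteq> set (defined_refs L))"

fun wf_client :: "client \<Rightarrow> bool" where
  "wf_client (L, M) \<longleftrightarrow> wf_library L \<and> wt M TUnit \<and> source_term M
     \<and> meths M \<subseteq> set (defined_meths L) \<union> set (abstract_meths L)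
     \<and> refs M \<subseteq> set (defined_refs L)"

fun good_client :: "client \<Rightarrow> bool" where
  "good_client (L, M) \<longleftrightarrow> \<not> has_assert M \<and> (\<forall>N \<in> set (lib_terms L). \<not> has_assert N)"

text \<open>Building.  \<open>N\<close> is the set of names mentioned in the program; fresh names avoid it.\<close>
inductive builds :: "meth set \<Rightarrow> decl list \<Rightarrow> repo \<Rightarrow> store \<Rightarrow> meth set \<Rightarrow> meth set
                       \<Rightarrow> repo \<times> store \<times> meth set \<times> meth set \<Rightarrow> bool" where
  b_nil: "builds N [] R S P A (R, S, P, A)"
| b_abs: "builds N ds R S P (insert m A) res \<Longrightarrow> builds N (Abstract m # ds) R S P A res"
| b_pub: "builds N ds (R(m \<mapsto> (x, M))) S (insert m P) A res \<Longrightarrow>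
          builds N (PublicM m x M # ds) R S P A res"
| b_priv: "builds N ds (R(m \<mapsto> (x, M))) S P A res \<Longrightarrow>
          builds N (PrivM m x M # ds) R S P A res"
| b_refint: "builds N ds R (S(r \<mapsto> IntT i)) P A res \<Longrightarrow>
          builds N (RefInt r i # ds) R S P A res"
| b_reflam: "m \<notin> dom R \<Longrightarrow> m \<notin> N \<Longrightarrow> refty r = TArrow (argty m) (resty m) \<Longrightarrow>
          builds N ds (R(m \<mapsto> (x, M))) (S(r \<mapsto> MethT m)) P A res \<Longrightarrow>
          builds N (RefLam r x M # ds) R S P A res"

definition prog_names :: "decl list \<Rightarrow> meth set" where
  "prog_names L = set (defined_meths L) \<union> set (abstract_meths L) \<union> \<Union> (meths ` set (lib_terms L))"

definition lib_builds :: "library \<Rightarrow> repo \<Rightarrow> store \<Rightarrow> meth set \<Rightarrow> meth set \<Rightarrow> bool" where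
  "lib_builds L R S P A \<longleftrightarrow> builds (prog_names L) L Map.empty Map.empty {} {} (R, S, P, A)"

fun client_builds :: "client \<Rightarrow> tm \<Rightarrow> repo \<Rightarrow> store \<Rightarrow> meth set \<Rightarrow> meth set \<Rightarrow> bool" where
  "client_builds (L, M) M' R S P A \<longleftrightarrow> M' = M \<and>
     builds (prog_names L \<union> meths M) L Map.empty Map.empty {} {} (R, S, P, A)"

definition sem_lib :: "library \<Rightarrow> (move list \<times> config) set" where
  "sem_lib L = {(\<tau>, \<rho>). \<exists>R S P A. lib_builds L R S P A \<and> ctrace (OC [] 0 R S P A 0) \<tau> \<rho>}"

definition sem_client :: "client \<Rightarrow> (move list \<times> config) set" where
  "sem_client C = {(\<tau>, \<rho>). \<exists>M R S P A. client_builds C M R S P A \<and> ctrace (PC [] M R S P A 0) \<tau> \<rho>}"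

definition compatible :: "library \<Rightarrow> client \<Rightarrow> bool" where
  "compatible L C \<longleftrightarrow> (\<exists>R S P A M R' S' P' A'.
     lib_builds L R S P A \<and> client_builds C M R' S' P' A' \<and>
     P = A' \<and> A = P' \<and> dom S \<inter> dom S' = {} \<and> dom R \<inter> dom R' = {})"

end

theory Submission
  imports Defs
begin

text \<open>The client replays the library trace.  A counter in its store records how far the trace has
  progressed.  Whenever the client receives a value, as the argument of one of its methods or as
  the result of one of its calls, it saves the private library names in that value in dedicated
  references and then calls a dispatcher, which reads the counter and plays the next client move
  of the trace: a call of a library method or the return of a pending call.  Names of the client
  and public names of the library are written into the client code, private names of the library
  are read back from the references.  The replay never gets stuck because library traces are
  well-behaved: calls and returns are well-bracketed, all values are well-typed, and every name
  either side sends is its own or has been disclosed to it before.\<close>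

section \<open>Evaluation contexts, typing and method names\<close>

fun ectx_comp :: "ectx \<Rightarrow> ectx \<Rightarrow> ectx" where
  "ectx_comp Hole E' = E'"
| "ectx_comp (EAssert E) E' = EAssert (ectx_comp E E')"
| "ectx_comp (EAssign r E) E' = EAssign r (ectx_comp E E')"
| "ectx_comp (EOpL op E N) E' = EOpL op (ectx_comp E E') N"
| "ectx_comp (EOpR op v E) E' = EOpR op v (ectx_comp E E')"
| "ectx_comp (EPairL E N) E' = EPairL (ectx_comp E E') N"
| "ectx_comp (EPairR v E) E' = EPairR v (ectx_comp E E')"
| "ectx_comp (EFst E) E' = EFst (ectx_comp E E')"
| "ectx_comp (ESnd E) E' = ESnd (ectx_comp E E')"
| "ectx_comp (EApp m E) E' = EApp m (ectx_comp E E')"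
| "ectx_comp (ELet x E N) E' = ELet x (ectx_comp E E') N"
| "ectx_comp (EIf E N1 N0) E' = EIf (ectx_comp E E') N1 N0"
| "ectx_comp (EBox E) E' = EBox (ectx_comp E E')"

lemma fill_ectx_comp [simp]: "fill (ectx_comp E E') t = fill E (fill E' t)"
  by (induct E) auto

lemma ectx_ok_ectx_comp [simp]: "ectx_ok (ectx_comp E E') \<longleftrightarrow> ectx_ok E \<and> ectx_ok E'"
  by (induct E) auto

inductive_cases wt_elims [elim!]:
  "wt (MethT m) t" "wt (IntT i) t" "wt UnitT t" "wt (VarT x) t" "wt (Lam x M) t"
  "wt (Assign r M) t" "wt (Deref r) t" "wt (BinOp op M N) t" "wt (Pair M N) t"
  "wt (Fst M) t" "wt (Snd M) t" "wt (App M N) t" "wt (If M N1 N0) t"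
  "wt (Letrec f x M N) t" "wt (Let x M N) t" "wt (Assert M) t" "wt (Box M) t"

lemma wt_MethT_iff: "wt (MethT m) t \<longleftrightarrow> t = TArrow (argty m) (resty m)"
  by (auto intro: wt.intros)

lemma wt_unique: "wt M t1 \<Longrightarrow> wt M t2 \<Longrightarrow> t1 = t2"
proof (induct arbitrary: t2 rule: wt.induct)
qed blast+

lemma wt_subst: "wt M t \<Longrightarrow> wt v (varty x) \<Longrightarrow> wt (subst x v M) t"
  by (induct rule: wt.induct) (auto intro: wt.intros)

lemma wt_fill: "wt (fill E M) t \<Longrightarrow> \<exists>t0. wt M t0 \<and> (\<forall>N. wt N t0 \<longrightarrow> wt (fill E N) t)"
proof (induct E arbitrary: t)
  case Hole
  then show ?case by auto
qed (fastforce intro: wt.intros)+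

lemma ty_neq_arrow_self: "t \<noteq> TArrow t b"
  by (induct t arbitrary: b) auto

definition repo_typed :: "repo \<Rightarrow> bool" where
  "repo_typed R \<longleftrightarrow> (\<forall>m x M. R m = Some (x, M) \<longrightarrow> varty x = argty m \<and> wt M (resty m))"

definition store_typed :: "store \<Rightarrow> bool" where
  "store_typed S \<longleftrightarrow> (\<forall>r v. S r = Some v \<longrightarrow> wt v (refty r))"

lemma head_preserves_wt:
  assumes "head X (M, R, S, k) (M', R', S', k')" "wt M t" "repo_typed R" "store_typed S"
  shows "wt M' t \<and> repo_typed R' \<and> store_typed S'"
  using assms
proof (cases rule: head.cases)
  case (h_letrec f m x N N')
  have "x \<noteq> f"
    using h_letrec assms(2) ty_neq_arrow_self[of "varty x"] by auto
  then show ?thesis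
    using h_letrec assms by (auto simp: repo_typed_def intro!: wt_subst intro: wt.intros)
qed (auto simp: repo_typed_def store_typed_def wt_MethT_iff dest: wt_unique
          intro!: wt_subst intro: wt.intros)

lemma redE:
  assumes "red X (M, R, S, k) (M', R', S', k')"
  obtains E M0 M0' where "ectx_ok E" "M = fill E M0" "M' = fill E M0'"
    "head X (M0, R, S, k) (M0', R', S', k')"
  using assms by (cases rule: red.cases) auto

lemma red_preserves_wt:
  assumes "red X (M, R, S, k) (M', R', S', k')" "wt M t" "repo_typed R" "store_typed S"
  shows "wt M' t \<and> repo_typed R' \<and> store_typed S'"
proof -
  obtain E M0 M0' where E: "M = fill E M0" "M' = fill E M0'" "head X (M0, R, S, k) (M0', R', S', k')"
    using assms(1) by (rule redE)
  obtain t0 where "wt M0 t0" "\<forall>N. wt N t0 \<longrightarrow> wt (fill E N) t"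
    using wt_fill assms(2) E(1) by blast
  then show ?thesis
    using head_preserves_wt[OF E(3) _ assms(3,4)] E(2) by auto
qed

definition repo_meths :: "repo \<Rightarrow> meth set" where
  "repo_meths R = \<Union> ((\<lambda>(x, N). meths N) ` ran R)"

definition store_meths :: "store \<Rightarrow> meth set" where
  "store_meths S = \<Union> (meths ` ran S)"

lemma ran_fun_upd_subset: "ran (f(a \<mapsto> b)) \<subseteq> insert b (ran f)"
  by (auto simp: ran_def)

lemma repo_meths_upd: "repo_meths (R(m \<mapsto> (x, M))) \<subseteq> repo_meths R \<union> meths M"
  using ran_fun_upd_subset[of R m "(x, M)"] unfolding repo_meths_def by blast

lemma store_meths_upd: "store_meths (S(r \<mapsto> v)) \<subseteq> store_meths S \<union> meths v"
  using ran_fun_upd_subset[of S r v] unfolding store_meths_def by blast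

lemma repo_meths_lookup: "R m = Some (x, M) \<Longrightarrow> meths M \<subseteq> repo_meths R"
  unfolding repo_meths_def ran_def by force

lemma store_meths_lookup: "S r = Some v \<Longrightarrow> meths v \<subseteq> store_meths S"
  unfolding store_meths_def ran_def by force

lemma meths_subst: "meths (subst x v M) \<subseteq> meths M \<union> meths v"
  by (induct M) auto

lemma meths_fill: "meths (fill E M) = meths (fill E UnitT) \<union> meths M"
  by (induct E) auto

lemma head_meths:
  assumes "head X (M, R, S, k) (M', R', S', k')"
  shows "meths M' \<union> repo_meths R' \<union> store_meths S'
           \<subseteq> meths M \<union> repo_meths R \<union> store_meths S \<union> (dom R' - dom R)
     \<and> dom R \<subseteq> dom R' \<and> (dom R' - dom R) \<inter> X = {}"
  using assms
proof cases
  case (h_letrec f m x N N')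
  have "meths (if x = f then N else subst f (MethT m) N) \<subseteq> meths N \<union> {m}"
    using meths_subst[of f "MethT m" N] by auto
  then have "repo_meths R' \<subseteq> repo_meths R \<union> meths N \<union> {m}"
    using repo_meths_upd[of R m x "if x = f then N else subst f (MethT m) N"] h_letrec by auto
  then show ?thesis
    using h_letrec meths_subst[of f "MethT m" N'] by auto
next
  case (h_let v x N)
  then show ?thesis using meths_subst[of x v N] by auto
next
  case (h_assign v r)
  then show ?thesis using store_meths_upd[of S r v] by auto
next
  case (h_deref r)
  then show ?thesis using store_meths_lookup[of S r M'] by auto
next
  case (h_lam x N m)
  then show ?thesis using repo_meths_upd[of R m x N] by auto
next
  case (h_call m x N v)
  then show ?thesis using repo_meths_lookup[of R m x N] meths_subst[of x v N] by auto
qed auto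

lemma red_meths:
  assumes "red X (M, R, S, k) (M', R', S', k')"
  shows "meths M' \<union> repo_meths R' \<union> store_meths S'
           \<subseteq> meths M \<union> repo_meths R \<union> store_meths S \<union> (dom R' - dom R)
     \<and> dom R \<subseteq> dom R' \<and> (dom R' - dom R) \<inter> X = {}"
proof -
  obtain E M0 M0' where "M = fill E M0" "M' = fill E M0'" "head X (M0, R, S, k) (M0', R', S', k')"
    using assms by (rule redE)
  then show ?thesis
    using head_meths meths_fill[of E M0] meths_fill[of E M0'] by blast
qed

section \<open>Invariants of library traces\<close>

fun push_pop :: "(nat \<times> meth) list \<Rightarrow> nat \<times> move \<Rightarrow> (nat \<times> meth) list" where
  "push_pop st (i, Call m v) = (i, m) # st"
| "push_pop st (i, Ret m v) = tl st"

definition pending_calls :: "move list \<Rightarrow> (nat \<times> meth) list" where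
  "pending_calls t = foldl push_pop [] (enumerate 0 t)"

lemma pending_calls_Nil [simp]: "pending_calls [] = []"
  by (simp add: pending_calls_def)

lemma pending_calls_snoc_Call [simp]:
  "pending_calls (t @ [Call m v]) = (length t, m) # pending_calls t"
  by (simp add: pending_calls_def enumerate_append_eq)

lemma pending_calls_snoc_Ret [simp]: "pending_calls (t @ [Ret m v]) = tl (pending_calls t)"
  by (simp add: pending_calls_def enumerate_append_eq)

fun move_meth :: "move \<Rightarrow> meth" where
  "move_meth (Call m v) = m"
| "move_meth (Ret m v) = m"

fun move_val :: "move \<Rightarrow> tm" where
  "move_val (Call m v) = v"
| "move_val (Ret m v) = v"

definition disclosed :: "(nat \<Rightarrow> bool) \<Rightarrow> move list \<Rightarrow> meth set" where
  "disclosed Q t = (\<Union>i \<in> {i. i < length t \<and> Q i}. meths (move_val (t ! i)))"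

lemma disclosed_Nil [simp]: "disclosed Q [] = {}"
  by (simp add: disclosed_def)

lemma disclosed_snoc [simp]:
  "disclosed Q (t @ [a]) = disclosed Q t \<union> (if Q (length t) then meths (move_val a) else {})"
proof -
  have "{i. i < length (t @ [a]) \<and> Q i}
          = {i. i < length t \<and> Q i} \<union> (if Q (length t) then {length t} else {})"
    by (auto simp: less_Suc_eq)
  moreover have "(\<Union>i \<in> {i. i < length t \<and> Q i}. meths (move_val ((t @ [a]) ! i))) = disclosed Q t"
    unfolding disclosed_def by (rule SUP_cong) (auto simp: nth_append)
  ultimately show ?thesis
    unfolding disclosed_def by auto
qed

text \<open>In a library trace the context plays at the even positions and the library at the odd
  ones, so calls of the context leave \<open>FNum\<close> frames and calls of the library \<open>FCtx\<close> frames.\<close>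

fun frame_matches :: "frame \<Rightarrow> nat \<times> meth \<Rightarrow> bool" where
  "frame_matches (FNum m l) (j, m') \<longleftrightarrow> even j \<and> m = m'"
| "frame_matches (FCtx m E) (j, m') \<longleftrightarrow> odd j \<and> m = m'"

fun stack_typed :: "frame list \<Rightarrow> bool"
  and stack_typed_at :: "ty \<Rightarrow> frame list \<Rightarrow> bool" where
  "stack_typed [] = True"
| "stack_typed (FCtx m E # Es) \<longleftrightarrow>
     (\<exists>t. (\<forall>v. wt v (resty m) \<longrightarrow> wt (fill E v) t) \<and> stack_typed_at t Es)"
| "stack_typed (FNum m l # Es) = False"
| "stack_typed_at t [] = False"
| "stack_typed_at t (FNum m l # Es) \<longleftrightarrow> t = resty m \<and> stack_typed Es"
| "stack_typed_at t (FCtx m E # Es) = False"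

definition stack_meths :: "frame list \<Rightarrow> meth set" where
  "stack_meths Es = \<Union> (frame_meths ` set Es)"

definition lib_inv :: "meth set \<Rightarrow> meth set \<Rightarrow> move list \<Rightarrow> frame list \<Rightarrow> repo \<Rightarrow> store
    \<Rightarrow> meth set \<Rightarrow> meth set \<Rightarrow> bool" where
  "lib_inv P0 A0 t Es R S P A \<longleftrightarrow> list_all2 frame_matches Es (pending_calls t)
     \<and> repo_typed R \<and> store_typed S
     \<and> repo_meths R \<union> store_meths S \<union> stack_meths Es \<subseteq> dom R \<union> A \<and> dom R \<inter> A = {}
     \<and> P \<subseteq> dom R \<and> P \<subseteq> P0 \<union> disclosed odd t \<and> A \<subseteq> A0 \<union> disclosed even t"

fun lib_config_inv :: "meth set \<Rightarrow> meth set \<Rightarrow> move list \<Rightarrow> config \<Rightarrow> bool" where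
  "lib_config_inv P0 A0 t (OC Es l R S P A k) \<longleftrightarrow>
     even (length t) \<and> stack_typed Es \<and> lib_inv P0 A0 t Es R S P A"
| "lib_config_inv P0 A0 t (PC Es M R S P A k) \<longleftrightarrow>
     odd (length t) \<and> (\<exists>ty. wt M ty \<and> stack_typed_at ty Es) \<and> meths M \<subseteq> dom R \<union> A
     \<and> lib_inv P0 A0 t Es R S P A"

fun conf_dom :: "config \<Rightarrow> meth set" where
  "conf_dom (OC Es l R S P A k) = dom R"
| "conf_dom (PC Es M R S P A k) = dom R"

fun conf_abstract :: "config \<Rightarrow> meth set" where
  "conf_abstract (OC Es l R S P A k) = A"
| "conf_abstract (PC Es M R S P A k) = A"

text \<open>\<open>LibN\<close> and \<open>CtxN\<close> over-approximate the names eventually defined by the library and by its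
  context, respectively.\<close>

definition lib_move_ok :: "meth set \<Rightarrow> meth set \<Rightarrow> meth set \<Rightarrow> meth set \<Rightarrow> move list \<Rightarrow> nat
    \<Rightarrow> bool" where
  "lib_move_ok P0 A0 LibN CtxN t n \<longleftrightarrow> (let pre = take n t in
     if even n then
       (case t ! n of
         Call f v \<Rightarrow> f \<in> P0 \<union> disclosed odd pre \<and> f \<in> LibN \<and> is_val v \<and> wt v (argty f)
           \<and> meths v \<subseteq> CtxN \<union> P0 \<union> disclosed odd pre
       | Ret m v \<Rightarrow> (\<exists>j st. pending_calls pre = (j, m) # st \<and> odd j) \<and> is_val v \<and> wt v (resty m)
           \<and> meths v \<subseteq> CtxN \<union> P0 \<union> disclosed odd pre)
     else
       (case t ! n of
         Call m v \<Rightarrow> m \<in> A0 \<union> disclosed even pre \<and> m \<in> CtxN \<and> is_val v \<and> wt v (argty m)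
           \<and> meths v \<subseteq> LibN \<union> A0 \<union> disclosed even pre
       | Ret f v \<Rightarrow> (\<exists>j st. pending_calls pre = (j, f) # st \<and> even j) \<and> is_val v \<and> wt v (resty f)
           \<and> meths v \<subseteq> LibN \<union> A0 \<union> disclosed even pre))"

lemma lib_move_ok_mono:
  "lib_move_ok P0 A0 LibN CtxN t n \<Longrightarrow> LibN \<subseteq> LibN' \<Longrightarrow> CtxN \<subseteq> CtxN'
    \<Longrightarrow> lib_move_ok P0 A0 LibN' CtxN' t n"
  unfolding lib_move_ok_def Let_def by (cases "t ! n"; cases "even n"; simp; blast)

lemma lib_move_ok_append:
  "n < length t \<Longrightarrow> lib_move_ok P0 A0 LibN CtxN (t @ u) n = lib_move_ok P0 A0 LibN CtxN t n"
  unfolding lib_move_ok_def by (simp add: nth_append)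

lemma lib_config_inv_int:
  assumes "lib_config_inv P0 A0 t c" "cstep c None c'"
  shows "lib_config_inv P0 A0 t c' \<and> conf_dom c \<subseteq> conf_dom c'
    \<and> conf_abstract c' = conf_abstract c"
  using assms(2)
proof cases
  case (c_int Es M R S P A k M' R' S' k')
  from assms(1) c_int obtain ty where ty: "wt M ty" "stack_typed_at ty Es"
    and M: "meths M \<subseteq> dom R \<union> A" and inv: "lib_inv P0 A0 t Es R S P A" and "odd (length t)"
    by auto
  have typed: "wt M' ty \<and> repo_typed R' \<and> store_typed S'"
    using red_preserves_wt[OF c_int(3) ty(1)] inv by (auto simp: lib_inv_def)
  have fresh: "meths M' \<union> repo_meths R' \<union> store_meths S'
          \<subseteq> meths M \<union> repo_meths R \<union> store_meths S \<union> (dom R' - dom R)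
     \<and> dom R \<subseteq> dom R' \<and> (dom R' - dom R) \<inter> used_names Es M R S P A = {}"
    using red_meths[OF c_int(3)] .
  have "A \<subseteq> used_names Es M R S P A"
    by (auto simp: used_names_def)
  then have "lib_inv P0 A0 t Es R' S' P A"
    using inv fresh typed M unfolding lib_inv_def by blast
  moreover have "meths M' \<subseteq> dom R' \<union> A"
  proof -
    have "repo_meths R \<union> store_meths S \<subseteq> dom R \<union> A" "dom R \<subseteq> dom R'"
      using inv fresh unfolding lib_inv_def by auto
    then show ?thesis
      using fresh M by blast
  qed
  ultimately show ?thesis
    using c_int \<open>odd (length t)\<close> ty typed fresh by auto
qed

lemma lib_config_inv_P_move:
  assumes "lib_config_inv P0 A0 t c" "cstep c (Some a) c'" "odd (length t)"
  shows "lib_config_inv P0 A0 (t @ [a]) c' \<and> conf_dom c \<subseteq> conf_dom c'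
    \<and> conf_abstract c \<subseteq> conf_abstract c'
    \<and> lib_move_ok P0 A0 (conf_dom c') (conf_abstract c') (t @ [a]) (length t)"
  using assms(2)
proof cases
  case (c_pq E v m A Es R S P k)
  from assms(1) c_pq obtain ty where ty: "wt (fill E (App (MethT m) v)) ty" "stack_typed_at ty Es"
    and M: "meths (fill E (App (MethT m) v)) \<subseteq> dom R \<union> A" and inv: "lib_inv P0 A0 t Es R S P A"
    by auto
  obtain t0 where t0: "wt (App (MethT m) v) t0" "\<forall>N. wt N t0 \<longrightarrow> wt (fill E N) ty"
    using wt_fill[OF ty(1)] by metis
  then have "t0 = resty m" and v: "wt v (argty m)"
    by auto
  then have "stack_typed (FCtx m E # Es)"
    using t0 ty(2) by auto
  moreover have mv: "meths v \<subseteq> dom R \<union> A" and "meths (fill E UnitT) \<subseteq> dom R \<union> A"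
    using M meths_fill[of E "App (MethT m) v"] by auto
  then have "lib_inv P0 A0 (t @ [a]) (FCtx m E # Es) R S (P \<union> (meths v \<inter> dom R)) A"
    using inv c_pq assms(3) unfolding lib_inv_def by (auto simp: stack_meths_def)
  moreover have "lib_move_ok P0 A0 (dom R) A (t @ [a]) (length t)"
    using inv c_pq assms(3) v mv unfolding lib_move_ok_def lib_inv_def by auto
  ultimately show ?thesis
    using c_pq assms(3) by auto
next
  case (c_pa v m l Es R S P A k)
  from assms(1) c_pa obtain ty where ty: "wt v ty" "stack_typed_at ty (FNum m l # Es)"
    and M: "meths v \<subseteq> dom R \<union> A" and inv: "lib_inv P0 A0 t (FNum m l # Es) R S P A"
    by auto
  from inv obtain j st where st: "pending_calls t = (j, m) # st" "even j" "list_all2 frame_matches Es st"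
    unfolding lib_inv_def by (cases "pending_calls t") (auto simp: list_all2_Cons1)
  have "lib_inv P0 A0 (t @ [a]) Es R S (P \<union> (meths v \<inter> dom R)) A"
    using inv c_pa assms(3) st M unfolding lib_inv_def by (auto simp: stack_meths_def)
  moreover have "lib_move_ok P0 A0 (dom R) A (t @ [a]) (length t)"
    using inv c_pa assms(3) st ty M unfolding lib_move_ok_def lib_inv_def by auto
  ultimately show ?thesis
    using c_pa assms(3) ty by auto
qed (use assms in auto)

lemma lib_config_inv_O_move:
  assumes "lib_config_inv P0 A0 t c" "cstep c (Some a) c'" "even (length t)"
  shows "lib_config_inv P0 A0 (t @ [a]) c' \<and> conf_dom c \<subseteq> conf_dom c'
    \<and> conf_abstract c \<subseteq> conf_abstract c'
    \<and> lib_move_ok P0 A0 (conf_dom c') (conf_abstract c') (t @ [a]) (length t)"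
  using assms(2)
proof cases
  case (c_oq m P R v Es l S A k)
  from assms(1) c_oq have inv: "lib_inv P0 A0 t Es R S P A" and "stack_typed Es"
    by auto
  have v: "is_val v" "wt v (argty m)" "meths v \<inter> dom R \<subseteq> P"
    using c_oq by (auto simp: o_val_def)
  then have "wt (App (MethT m) v) (resty m)"
    by (auto intro: wt.intros)
  moreover have "lib_inv P0 A0 (t @ [a]) (FNum m (l + 1) # Es) R S P (A \<union> (meths v - dom R))"
    using inv c_oq assms(3) unfolding lib_inv_def by (auto simp: stack_meths_def)
  moreover have "meths (App (MethT m) v) \<subseteq> dom R \<union> (A \<union> (meths v - dom R))"
    using c_oq inv unfolding lib_inv_def by auto
  moreover have "lib_move_ok P0 A0 (dom R) (A \<union> (meths v - dom R)) (t @ [a]) (length t)"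
    using inv c_oq assms(3) v unfolding lib_move_ok_def lib_inv_def by auto
  ultimately show ?thesis
    using c_oq assms(3) \<open>stack_typed Es\<close> by auto
next
  case (c_oa R P v m E Es l S A k)
  from assms(1) c_oa have inv: "lib_inv P0 A0 t (FCtx m E # Es) R S P A"
    and "stack_typed (FCtx m E # Es)"
    by auto
  then obtain ty where ty: "\<forall>v. wt v (resty m) \<longrightarrow> wt (fill E v) ty" "stack_typed_at ty Es"
    by auto
  from inv obtain j st where st: "pending_calls t = (j, m) # st" "odd j" "list_all2 frame_matches Es st"
    unfolding lib_inv_def by (cases "pending_calls t") (auto simp: list_all2_Cons1)
  have v: "is_val v" "wt v (resty m)" "meths v \<inter> dom R \<subseteq> P"
    using c_oa by (auto simp: o_val_def)
  have "meths (fill E UnitT) \<subseteq> dom R \<union> A"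
    using inv unfolding lib_inv_def stack_meths_def by auto
  then have "meths (fill E v) \<subseteq> dom R \<union> (A \<union> (meths v - dom R))"
    using meths_fill[of E v] by auto
  moreover have "lib_inv P0 A0 (t @ [a]) Es R S P (A \<union> (meths v - dom R))"
    using inv c_oa assms(3) st unfolding lib_inv_def by (auto simp: stack_meths_def)
  moreover have "lib_move_ok P0 A0 (dom R) (A \<union> (meths v - dom R)) (t @ [a]) (length t)"
    using inv c_oa assms(3) v st unfolding lib_move_ok_def lib_inv_def by auto
  ultimately show ?thesis
    using c_oa assms(3) ty v by auto
qed (use assms in auto)

lemma lib_config_inv_trace:
  assumes "ctrace c t c'" "lib_config_inv P0 A0 pre c"
    "\<forall>n<length pre. lib_move_ok P0 A0 (conf_dom c) (conf_abstract c) pre n"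
  shows "lib_config_inv P0 A0 (pre @ t) c'
    \<and> (\<forall>n<length (pre @ t). lib_move_ok P0 A0 (conf_dom c') (conf_abstract c') (pre @ t) n)
    \<and> conf_dom c \<subseteq> conf_dom c' \<and> conf_abstract c \<subseteq> conf_abstract c'"
  using assms
proof (induct arbitrary: pre rule: ctrace.induct)
  case (ct_refl c)
  then show ?case by auto
next
  case (ct_int c c' t c'')
  have step: "lib_config_inv P0 A0 pre c' \<and> conf_dom c \<subseteq> conf_dom c'
    \<and> conf_abstract c' = conf_abstract c"
    using lib_config_inv_int ct_int by blast
  then have "\<forall>n<length pre. lib_move_ok P0 A0 (conf_dom c') (conf_abstract c') pre n"
    using ct_int(5) lib_move_ok_mono by blast
  then show ?case
    using ct_int(3)[of pre] step by auto
next
  case (ct_mv c a c' t c'')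
  have step: "lib_config_inv P0 A0 (pre @ [a]) c' \<and> conf_dom c \<subseteq> conf_dom c'
    \<and> conf_abstract c \<subseteq> conf_abstract c'
    \<and> lib_move_ok P0 A0 (conf_dom c') (conf_abstract c') (pre @ [a]) (length pre)"
    using lib_config_inv_P_move lib_config_inv_O_move ct_mv(1,4) by blast
  have "\<forall>n<length (pre @ [a]). lib_move_ok P0 A0 (conf_dom c') (conf_abstract c') (pre @ [a]) n"
  proof (intro allI impI)
    fix n
    assume "n < length (pre @ [a])"
    then consider "n < length pre" | "n = length pre"
      by fastforce
    then show "lib_move_ok P0 A0 (conf_dom c') (conf_abstract c') (pre @ [a]) n"
      by cases (use ct_mv(5) step lib_move_ok_mono lib_move_ok_append in \<open>metis+\<close>)
  qed
  then show ?case
    using ct_mv(3)[of "pre @ [a]"] step by auto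
qed

lemma builds_props:
  assumes "builds N ds R S P A res"
  shows "res = (R', S', P', A') \<Longrightarrow> \<forall>d\<in>set ds. decl_typed d \<Longrightarrow> repo_typed R \<Longrightarrow> store_typed S \<Longrightarrow>
    repo_typed R' \<and> store_typed S'
    \<and> P' = P \<union> set (concat (map decl_pub ds)) \<and> A' = A \<union> set (concat (map decl_abs ds))
    \<and> dom S' = dom S \<union> set (concat (map decl_ref ds))
    \<and> dom R \<union> set (concat (map decl_meth ds)) \<subseteq> dom R'
    \<and> dom R' - dom R - set (concat (map decl_meth ds)) \<subseteq> - N
    \<and> repo_meths R' \<subseteq> repo_meths R \<union> \<Union> (meths ` set (concat (map decl_terms ds)))
    \<and> store_meths S' \<subseteq> store_meths S \<union> dom R'
    \<and> (finite (dom R) \<longrightarrow> finite (dom R'))"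
  using assms
proof (induct arbitrary: R' S' P' A' rule: builds.induct)
  case (b_nil N R S P A)
  then show ?case by auto
next
  case (b_abs N ds R S P m A res)
  then show ?case by auto
next
  case (b_pub N ds R m x M S P A res)
  have body_typed: "varty x = argty m \<and> wt M (resty m)" using b_pub(4) by auto
  have R_typed: "repo_typed (R(m \<mapsto> (x, M)))" using b_pub(5) body_typed by (auto simp: repo_typed_def)
  have ds_typed: "\<forall>d\<in>set ds. decl_typed d" using b_pub(4) by simp
  note IH = b_pub(2)[OF b_pub(3) ds_typed R_typed b_pub(6)]
  have dom_R: "dom (R(m \<mapsto> (x, M))) = insert m (dom R)" by simp
  have meths_R: "repo_meths (\<lambda>a. if a = m then Some (x, M) else R a) \<subseteq> repo_meths R \<union> meths M"
    using repo_meths_upd[of R m x M] by (simp add: fun_upd_def)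
  show ?case unfolding dom_R using IH[unfolded dom_R] meths_R by (auto simp del: domIff)
next
  case (b_priv N ds R m x M S P A res)
  have body_typed: "varty x = argty m \<and> wt M (resty m)" using b_priv(4) by auto
  have R_typed: "repo_typed (R(m \<mapsto> (x, M)))" using b_priv(5) body_typed by (auto simp: repo_typed_def)
  have ds_typed: "\<forall>d\<in>set ds. decl_typed d" using b_priv(4) by simp
  note IH = b_priv(2)[OF b_priv(3) ds_typed R_typed b_priv(6)]
  have dom_R: "dom (R(m \<mapsto> (x, M))) = insert m (dom R)" by simp
  have meths_R: "repo_meths (\<lambda>a. if a = m then Some (x, M) else R a) \<subseteq> repo_meths R \<union> meths M"
    using repo_meths_upd[of R m x M] by (simp add: fun_upd_def)
  show ?case unfolding dom_R using IH[unfolded dom_R] meths_R by (auto simp del: domIff)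
next
  case (b_refint N ds R S r i P A res)
  have S_typed: "store_typed (S(r \<mapsto> IntT i))" using b_refint(4,6)
    by (auto simp: store_typed_def intro: wt.intros)
  have ds_typed: "\<forall>d\<in>set ds. decl_typed d" using b_refint(4) by simp
  note IH = b_refint(2)[OF b_refint(3) ds_typed b_refint(5) S_typed]
  have meths_S: "store_meths (\<lambda>a. if a = r then Some (IntT i) else S a) \<subseteq> store_meths S"
    using store_meths_upd[of S r "IntT i"] by (simp add: fun_upd_def)
  have dom_S: "dom (\<lambda>a. if a = r then Some (IntT i) else S a) = insert r (dom S)" by (auto simp: dom_def)
  show ?case using IH[unfolded dom_S] meths_S by (auto simp del: domIff)
next
  case (b_reflam m R N r ds x M S P A res)
  have body_typed: "varty x = argty m \<and> wt M (resty m)" using b_reflam(7) b_reflam(3) by auto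
  have R_typed: "repo_typed (R(m \<mapsto> (x, M)))" using b_reflam(8) body_typed by (auto simp: repo_typed_def)
  have S_typed: "store_typed (S(r \<mapsto> MethT m))" using b_reflam(3,9)
    by (auto simp: store_typed_def intro: wt.intros)
  have ds_typed: "\<forall>d\<in>set ds. decl_typed d" using b_reflam(7) by simp
  note IH = b_reflam(5)[OF b_reflam(6) ds_typed R_typed S_typed]
  have dom_R: "dom (R(m \<mapsto> (x, M))) = insert m (dom R)" by simp
  have meths_R: "repo_meths (\<lambda>a. if a = m then Some (x, M) else R a) \<subseteq> repo_meths R \<union> meths M"
    using repo_meths_upd[of R m x M] by (simp add: fun_upd_def)
  have meths_S: "store_meths (\<lambda>a. if a = r then Some (MethT m) else S a) \<subseteq> store_meths S \<union> {m}"
    using store_meths_upd[of S r "MethT m"] by (simp add: fun_upd_def)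
  have dom_S: "dom (S(r \<mapsto> MethT m)) = insert r (dom S)" by simp
  show ?case unfolding dom_R using IH[unfolded dom_R dom_S] meths_R meths_S b_reflam(2) by (auto simp del: domIff)
qed

lemma decl_pub_subset_decl_meth: "set (concat (map decl_pub ds)) \<subseteq> set (concat (map decl_meth ds))"
proof (induct ds)
  case (Cons d ds)
  then show ?case by (cases d) auto
qed simp

lemma lib_builds_props:
  assumes wf: "wf_library L" and b: "lib_builds L R0 S0 P0 A0"
  shows "repo_typed R0 \<and> store_typed S0 \<and> P0 \<subseteq> dom R0 \<and> dom R0 \<inter> A0 = {}
    \<and> repo_meths R0 \<union> store_meths S0 \<subseteq> dom R0 \<union> A0
    \<and> finite P0 \<and> finite A0 \<and> finite (dom R0) \<and> finite (dom S0)"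
proof -
  have empty: "repo_meths Map.empty = {}" "store_meths Map.empty = {}"
    by (auto simp: repo_meths_def store_meths_def)
  have "repo_typed R0 \<and> store_typed S0"
    and "P0 = set (concat (map decl_pub L))
    \<and> A0 = set (abstract_meths L) \<and> dom S0 = set (defined_refs L)
    \<and> set (defined_meths L) \<subseteq> dom R0 \<and> dom R0 - set (defined_meths L) \<subseteq> - prog_names L
    \<and> repo_meths R0 \<subseteq> \<Union> (meths ` set (lib_terms L)) \<and> store_meths S0 \<subseteq> dom R0
    \<and> finite (dom R0)"
    using builds_props[OF b[unfolded lib_builds_def], of R0 S0 P0 A0] wf empty
    unfolding wf_library_def abstract_meths_def defined_refs_def defined_meths_def lib_terms_def
    by (auto simp: repo_typed_def store_typed_def simp del: domIff)
  moreover have "set (abstract_meths L) \<subseteq> prog_names L"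
    by (auto simp: prog_names_def)
  moreover have "\<forall>M\<in>set (lib_terms L). meths M \<subseteq> set (defined_meths L) \<union> set (abstract_meths L)"
    "set (abstract_meths L) \<inter> set (defined_meths L) = {}"
    using wf unfolding wf_library_def by auto
  moreover have "set (concat (map decl_pub L)) \<subseteq> set (defined_meths L)"
    using decl_pub_subset_decl_meth[of L] by (simp add: defined_meths_def)
  ultimately have "repo_typed R0 \<and> store_typed S0 \<and> P0 \<subseteq> dom R0 \<and> dom R0 \<inter> A0 = {}
    \<and> repo_meths R0 \<union> store_meths S0 \<subseteq> dom R0 \<union> A0 \<and> finite (dom R0)"
    by blast
  moreover have "finite P0 \<and> finite A0 \<and> finite (dom S0)"
    using \<open>P0 = _ \<and> _\<close> by simp
  ultimately show ?thesis
    by blast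
qed

text \<open>The witnesses for \<open>LibN\<close> and \<open>CtxN\<close> are the repository domain and the set of abstract
  names of the final configuration.\<close>

lemma lib_trace_moves_ok:
  assumes "wf_library L" "lib_builds L R0 S0 P0 A0" "ctrace (OC [] 0 R0 S0 P0 A0 0) \<tau> \<rho>"
  obtains LibN CtxN where "dom R0 \<subseteq> LibN" "A0 \<subseteq> CtxN" "LibN \<inter> CtxN = {}"
    "\<And>n. n < length \<tau> \<Longrightarrow> lib_move_ok P0 A0 LibN CtxN \<tau> n"
proof -
  have "lib_config_inv P0 A0 [] (OC [] 0 R0 S0 P0 A0 0)"
    using lib_builds_props[OF assms(1,2)] by (auto simp: lib_inv_def stack_meths_def)
  from lib_config_inv_trace[OF assms(3) this]
  have "lib_config_inv P0 A0 \<tau> \<rho>" "\<forall>n<length \<tau>. lib_move_ok P0 A0 (conf_dom \<rho>) (conf_abstract \<rho>) \<tau> n"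
    "dom R0 \<subseteq> conf_dom \<rho>" "A0 \<subseteq> conf_abstract \<rho>"
    by simp_all
  moreover have "conf_dom \<rho> \<inter> conf_abstract \<rho> = {}"
    using \<open>lib_config_inv P0 A0 \<tau> \<rho>\<close> by (cases \<rho>) (auto simp: lib_inv_def)
  ultimately show ?thesis
    using that by blast
qed

section \<open>Internal evaluation\<close>

abbreviation isteps :: "config \<Rightarrow> config \<Rightarrow> bool" where
  "isteps c c' \<equiv> ctrace c [] c'"

lemma ctrace_append: "ctrace c t1 c' \<Longrightarrow> ctrace c' t2 c'' \<Longrightarrow> ctrace c (t1 @ t2) c''"
  by (induct rule: ctrace.induct) (auto intro: ctrace.intros)

lemma isteps_trans [trans]: "isteps c c' \<Longrightarrow> isteps c' c'' \<Longrightarrow> isteps c c''"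
  using ctrace_append[of c "[]" c' "[]" c''] by simp

lemma ctrace_single: "isteps c c1 \<Longrightarrow> cstep c1 (Some a) c2 \<Longrightarrow> isteps c2 c' \<Longrightarrow> ctrace c [a] c'"
  using ctrace_append[of c "[]" c1 "[a]" c'] by (auto intro: ctrace.intros)

lemma head_isteps:
  assumes "ectx_ok E" "\<And>X. head X (M, R, S, k) (M', R', S', k')"
  shows "isteps (PC Es (fill E M) R S P A k) (PC Es (fill E M') R' S' P A k')"
proof -
  have "red (used_names Es (fill E M) R S P A) (fill E M, R, S, k) (fill E M', R', S', k')"
    using assms by (auto intro: red.intros)
  then show ?thesis
    by (auto intro: c_int ctrace.intros)
qed

definition evals :: "store \<Rightarrow> tm \<Rightarrow> tm \<Rightarrow> store \<Rightarrow> bool" where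
  "evals S M N S' \<longleftrightarrow> (\<forall>E Es R P A k. ectx_ok E \<longrightarrow>
     isteps (PC Es (fill E M) R S P A k) (PC Es (fill E N) R S' P A k))"

lemma evalsD:
  "evals S M N S' \<Longrightarrow> ectx_ok E \<Longrightarrow> isteps (PC Es (fill E M) R S P A k) (PC Es (fill E N) R S' P A k)"
  unfolding evals_def by blast

lemma evals_refl: "evals S M M S"
  unfolding evals_def by (auto intro: ctrace.intros)

lemma evals_trans: "evals S M N S1 \<Longrightarrow> evals S1 N N' S2 \<Longrightarrow> evals S M N' S2"
  unfolding evals_def by (blast intro: isteps_trans)

lemma evals_head: "(\<And>X R k. head X (M, R, S, k) (N, R, S', k)) \<Longrightarrow> evals S M N S'"
  unfolding evals_def by (auto intro: head_isteps)

lemma evals_fill: "evals S M N S' \<Longrightarrow> ectx_ok E \<Longrightarrow> evals S (fill E M) (fill E N) S'"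
  unfolding evals_def using ectx_ok_ectx_comp fill_ectx_comp by metis

text \<open>A big-step evaluator for the call-free fragment in which the client code is written.\<close>

fun eval_simple :: "store \<Rightarrow> tm \<Rightarrow> (tm \<times> store) option" where
  "eval_simple S (IntT i) = Some (IntT i, S)"
| "eval_simple S UnitT = Some (UnitT, S)"
| "eval_simple S (MethT m) = Some (MethT m, S)"
| "eval_simple S (Deref r) =
     (case S r of Some v \<Rightarrow> if is_val v then Some (v, S) else None | None \<Rightarrow> None)"
| "eval_simple S (Pair M N) = (case eval_simple S M of None \<Rightarrow> None | Some (v, S1) \<Rightarrow>
      (case eval_simple S1 N of None \<Rightarrow> None | Some (w, S2) \<Rightarrow> Some (Pair v w, S2)))"
| "eval_simple S (Fst M) = (case eval_simple S M of Some (Pair v w, S1) \<Rightarrow> Some (v, S1) | _ \<Rightarrow> None)"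
| "eval_simple S (Snd M) = (case eval_simple S M of Some (Pair v w, S1) \<Rightarrow> Some (w, S1) | _ \<Rightarrow> None)"
| "eval_simple S (Assign r M) =
     (case eval_simple S M of None \<Rightarrow> None | Some (v, S1) \<Rightarrow> Some (UnitT, S1(r \<mapsto> v)))"
| "eval_simple S (BinOp op M N) = (case eval_simple S M of Some (IntT i, S1) \<Rightarrow>
      (case eval_simple S1 N of Some (IntT j, S2) \<Rightarrow> Some (IntT (opsem op i j), S2) | _ \<Rightarrow> None)
    | _ \<Rightarrow> None)"
| "eval_simple S (If M N1 N0) = (case eval_simple S M of Some (IntT i, S1) \<Rightarrow>
      (if i \<noteq> 0 then eval_simple S1 N1 else eval_simple S1 N0) | _ \<Rightarrow> None)"
| "eval_simple S _ = None"

lemma eval_simple_val: "is_val v \<Longrightarrow> eval_simple S v = Some (v, S)"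
  by (induct v) auto

lemma eval_simple_sound: "eval_simple S M = Some (v, S') \<Longrightarrow> is_val v \<and> evals S M v S'"
proof (induct S M arbitrary: v S' rule: eval_simple.induct)
  case (4 S r)
  then show ?case
    by (auto split: option.splits if_splits intro!: evals_head h_deref)
next
  case (5 S M N)
  then obtain v1 S1 w where ev: "eval_simple S M = Some (v1, S1)" "eval_simple S1 N = Some (w, S')"
    "v = Pair v1 w"
    by (auto split: option.splits)
  with 5 have "is_val v1" "evals S (Pair M N) (Pair v1 N) S1" "is_val w" "evals S1 (Pair v1 N) v S'"
    using evals_fill[where E = "EPairL Hole N"] evals_fill[where E = "EPairR v1 Hole"] by auto
  then show ?case
    using ev(3) evals_trans by auto
next
  case (6 S M)
  then obtain v2 S1 where ev: "eval_simple S M = Some (Pair v v2, S1)" "S' = S1"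
    by (auto split: option.splits tm.splits)
  with 6 have "evals S (Fst M) (Fst (Pair v v2)) S'" "is_val v" "is_val v2"
    using evals_fill[where E = "EFst Hole"] by auto
  then show ?case
    by (auto intro: evals_trans evals_head h_fst)
next
  case (7 S M)
  then obtain v1 S1 where ev: "eval_simple S M = Some (Pair v1 v, S1)" "S' = S1"
    by (auto split: option.splits tm.splits)
  with 7 have "evals S (Snd M) (Snd (Pair v1 v)) S'" "is_val v1" "is_val v"
    using evals_fill[where E = "ESnd Hole"] by auto
  then show ?case
    by (auto intro: evals_trans evals_head h_snd)
next
  case (8 S r M)
  then obtain v1 S1 where ev: "eval_simple S M = Some (v1, S1)" "v = UnitT" "S' = S1(r \<mapsto> v1)"
    by (auto split: option.splits)
  with 8 have "evals S (Assign r M) (Assign r v1) S1" "is_val v1"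
    using evals_fill[where E = "EAssign r Hole"] by auto
  moreover from \<open>is_val v1\<close> have "evals S1 (Assign r v1) UnitT S'"
    unfolding ev(3) by (intro evals_head h_assign)
  ultimately show ?case
    using ev(2) evals_trans by auto
next
  case (9 S op M N)
  then obtain i S1 j where ev: "eval_simple S M = Some (IntT i, S1)" "eval_simple S1 N = Some (IntT j, S')"
    "v = IntT (opsem op i j)"
    by (auto split: option.splits tm.splits)
  with 9 have "evals S (BinOp op M N) (BinOp op (IntT i) N) S1"
    "evals S1 (BinOp op (IntT i) N) (BinOp op (IntT i) (IntT j)) S'"
    using evals_fill[where E = "EOpL op Hole N"] evals_fill[where E = "EOpR op (IntT i) Hole"] by auto
  then show ?case
    using ev by (auto intro: evals_trans evals_head h_op)
next
  case (10 S M N1 N0)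
  then obtain i S1 where ev: "eval_simple S M = Some (IntT i, S1)"
    by (auto split: option.splits tm.splits)
  with 10 have "evals S (If M N1 N0) (If (IntT i) N1 N0) S1"
    using evals_fill[where E = "EIf Hole N1 N0"] by auto
  moreover have "evals S1 (If (IntT i) N1 N0) (if i \<noteq> 0 then N1 else N0) S1"
    by (auto intro: evals_head h_if1 h_if0)
  moreover have "is_val v \<and> evals S1 (if i \<noteq> 0 then N1 else N0) v S'"
    using 10 ev by (cases "i \<noteq> 0") auto
  ultimately show ?case
    by (meson evals_trans)
qed (auto intro: evals_refl)

lemma eval_simple_isteps:
  "eval_simple S M = Some (v, S') \<Longrightarrow> ectx_ok E \<Longrightarrow>
     isteps (PC Es (fill E M) R S P A k) (PC Es (fill E v) R S' P A k)"
  using eval_simple_sound evalsD by blast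

fun value_passing :: "ectx \<Rightarrow> bool" where
  "value_passing Hole = True"
| "value_passing (EBox E) = value_passing E"
| "value_passing (ESnd E) = (case E of EPairR v E' \<Rightarrow> v = UnitT \<and> value_passing E' | _ \<Rightarrow> False)"
| "value_passing _ = False"

fun ctx_boxes :: "ectx \<Rightarrow> nat" where
  "ctx_boxes Hole = 0"
| "ctx_boxes (EBox E) = Suc (ctx_boxes E)"
| "ctx_boxes (EAssert E) = ctx_boxes E"
| "ctx_boxes (EAssign r E) = ctx_boxes E"
| "ctx_boxes (EOpL op E N) = ctx_boxes E"
| "ctx_boxes (EOpR op v E) = ctx_boxes E"
| "ctx_boxes (EPairL E N) = ctx_boxes E"
| "ctx_boxes (EPairR v E) = ctx_boxes E"
| "ctx_boxes (EFst E) = ctx_boxes E"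
| "ctx_boxes (ESnd E) = ctx_boxes E"
| "ctx_boxes (EApp m E) = ctx_boxes E"
| "ctx_boxes (ELet x E N) = ctx_boxes E"
| "ctx_boxes (EIf E N1 N0) = ctx_boxes E"

lemma ctx_boxes_ectx_comp [simp]: "ctx_boxes (ectx_comp E E') = ctx_boxes E + ctx_boxes E'"
  by (induct E) auto

fun stack_boxes :: "frame list \<Rightarrow> nat" where
  "stack_boxes [] = 0"
| "stack_boxes (FCtx f E # Es) = ctx_boxes E + stack_boxes Es"
| "stack_boxes (FNum m l # Es) = stack_boxes Es"

lemma value_passing_ectx_ok: "value_passing E \<Longrightarrow> ectx_ok E"
  by (induct E rule: value_passing.induct) (auto split: ectx.splits)

lemma value_passing_ectx_comp: "value_passing E \<Longrightarrow> value_passing E' \<Longrightarrow> value_passing (ectx_comp E E')"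
  by (induct E rule: value_passing.induct) (auto split: ectx.splits)

lemma value_passing_isteps:
  "value_passing E \<Longrightarrow> is_val v \<Longrightarrow> ectx_ok C \<Longrightarrow>
   isteps (PC Es (fill C (fill E v)) R S P A (ctx_boxes E + k)) (PC Es (fill C v) R S P A k)"
proof (induct E arbitrary: C k rule: value_passing.induct)
  case 1
  then show ?case by (auto intro: ctrace.intros)
next
  case (2 E)
  have "isteps (PC Es (fill (ectx_comp C (EBox Hole)) (fill E v)) R S P A (ctx_boxes E + Suc k))
               (PC Es (fill (ectx_comp C (EBox Hole)) v) R S P A (Suc k))"
    using 2 by (intro 2(1)) auto
  moreover have "isteps (PC Es (fill C (Box v)) R S P A (Suc k)) (PC Es (fill C v) R S P A k)"
    using 2 by (auto intro!: head_isteps h_box)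
  ultimately show ?case
    by (auto intro: isteps_trans)
next
  case (3 E)
  then obtain E' where E: "E = EPairR UnitT E'" "value_passing E'"
    by (auto split: ectx.splits)
  have "isteps (PC Es (fill (ectx_comp C (ESnd (EPairR UnitT Hole))) (fill E' v)) R S P A (ctx_boxes E' + k))
               (PC Es (fill (ectx_comp C (ESnd (EPairR UnitT Hole))) v) R S P A k)"
    using 3 E by (intro 3(1)) auto
  moreover have "isteps (PC Es (fill C (Snd (Pair UnitT v))) R S P A k) (PC Es (fill C v) R S P A k)"
    using 3 by (auto intro!: head_isteps h_snd)
  ultimately show ?case
    using E by (auto intro: isteps_trans)
qed auto

section \<open>The replaying client\<close>

fun mnum :: "meth \<Rightarrow> nat" where
  "mnum (Meth n a b) = n"

fun rnum :: "ref \<Rightarrow> nat" where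
  "rnum (Ref n t) = n"

lemma finite_meths [simp]: "finite (meths M)"
  by (induct M) auto

definition trace_meths :: "move list \<Rightarrow> meth set" where
  "trace_meths t = (\<Union>a \<in> set t. insert (move_meth a) (meths (move_val a)))"

lemma finite_trace_meths: "finite (trace_meths t)"
  unfolding trace_meths_def by auto

lemma nth_in_trace_meths:
  assumes "i < length t"
  shows "move_meth (t ! i) \<in> trace_meths t" "meths (move_val (t ! i)) \<subseteq> trace_meths t"
  using nth_mem[OF assms] unfolding trace_meths_def by auto

definition list_of :: "'a set \<Rightarrow> 'a list" where
  "list_of X = (SOME xs. set xs = X \<and> distinct xs)"

lemma list_of: "finite X \<Longrightarrow> set (list_of X) = X \<and> distinct (list_of X)"
  unfolding list_of_def by (rule someI_ex) (rule finite_distinct_list)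

abbreviation Seq :: "tm \<Rightarrow> tm \<Rightarrow> tm" where
  "Seq M N \<equiv> Snd (Pair M N)"

definition arg_var :: "ty \<Rightarrow> var" where
  "arg_var t = Var 0 t"

definition res_var :: "ty \<Rightarrow> var" where
  "res_var t = Var 1 t"

definition fun_var :: "ty \<Rightarrow> var" where
  "fun_var t = Var 2 t"

lemma varty_code_vars [simp]: "varty (arg_var t) = t" "varty (res_var t) = t" "varty (fun_var t) = t"
  by (simp_all add: arg_var_def res_var_def fun_var_def)

text \<open>Names of the library are numbered below \<open>K\<close>, so the client can allocate the
  names of its dispatchers and of its reference stubs above \<open>K\<close>; its references are numbered from
  \<open>B\<close> on.\<close>

locale replay =
  fixes \<tau> :: "move list" and P0 A0 LibN CtxN :: "meth set" and K B :: nat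
  assumes moves_ok: "\<And>n. n < length \<tau> \<Longrightarrow> lib_move_ok P0 A0 LibN CtxN \<tau> n"
    and lib_ctx_disjoint: "LibN \<inter> CtxN = {}"
    and A0_ctx: "A0 \<subseteq> CtxN"
    and P0_lib: "P0 \<subseteq> LibN"
    and finite_A0: "finite A0"
    and finite_P0: "finite P0"
    and K_bound: "\<And>m. m \<in> A0 \<union> P0 \<union> trace_meths \<tau> \<Longrightarrow> mnum m < K"
begin

text \<open>\<open>Priv\<close> are the names the client discloses besides the library's abstract ones; together with
  the public and abstract names of the library they can be written into the client code
  (\<open>Static\<close>).  The remaining names of the trace (\<open>Dyn\<close>) are private names of the library, which
  the client learns at run time and keeps in references.\<close>

definition Priv :: "meth set" where
  "Priv = trace_meths \<tau> \<inter> CtxN - A0"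

definition Static :: "meth set" where
  "Static = A0 \<union> P0 \<union> Priv"

definition Dyn :: "meth set" where
  "Dyn = trace_meths \<tau> - Static"

definition res_tys :: "ty list" where
  "res_tys = list_of (insert TUnit (resty ` (A0 \<union> Priv)))"

definition loop_meth :: "ty \<Rightarrow> meth" where
  "loop_meth b = Meth K TUnit b"

fun stub_meth :: "meth \<Rightarrow> meth" where
  "stub_meth (Meth n a b) = Meth (K + 1 + n) a b"

definition counter :: ref where
  "counter = Ref B TInt"

fun ref_of :: "meth \<Rightarrow> ref" where
  "ref_of (Meth n a b) = Ref (B + 1 + n) (TArrow a b)"

fun val_code :: "tm \<Rightarrow> tm" where
  "val_code (MethT d) = (if d \<in> Static then MethT d else Deref (ref_of d))"
| "val_code (Pair a b) = Pair (val_code a) (val_code b)"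
| "val_code t = t"

fun save_code :: "tm \<Rightarrow> tm \<Rightarrow> tm" where
  "save_code p (MethT d) = (if d \<in> Static then UnitT else Assign (ref_of d) p)"
| "save_code p (Pair a b) = Seq (save_code (Fst p) a) (save_code (Snd p) b)"
| "save_code p t = UnitT"

text \<open>The counter always holds the position in \<open>\<tau>\<close> of the next move of the client, so the value
  received with the library's move \<open>j\<close> is recognised by the counter value \<open>j + 1\<close>.\<close>

definition received :: "ty \<Rightarrow> (nat \<times> tm) list" where
  "received a = map (\<lambda>j. (Suc j, move_val (\<tau> ! j)))
     (filter (\<lambda>j. odd j \<and> wt (move_val (\<tau> ! j)) a) [0..<length \<tau>])"

fun save_received :: "tm \<Rightarrow> (nat \<times> tm) list \<Rightarrow> tm" where
  "save_received p [] = UnitT"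
| "save_received p ((c, v) # xs) =
     If (BinOp Equal (Deref counter) (IntT (int c))) (save_code p v) (save_received p xs)"

definition loop_call :: "ty \<Rightarrow> tm" where
  "loop_call b = App (MethT (loop_meth b)) UnitT"

text \<open>Application evaluates only its argument, so a method read from a reference has to be bound by
  a \<open>let\<close> before it can be called.\<close>

definition call_code :: "meth \<Rightarrow> tm \<Rightarrow> tm" where
  "call_code f v = (if f \<in> Static then App (MethT f) (val_code v)
     else Let (fun_var (TArrow (argty f) (resty f))) (Deref (ref_of f))
            (App (VarT (fun_var (TArrow (argty f) (resty f)))) (val_code v)))"

definition after_call :: "meth \<Rightarrow> ty \<Rightarrow> tm" where
  "after_call f b = Seq (save_received (VarT (res_var (resty f))) (received (resty f))) (loop_call b)"

text \<open>On a legal trace the fallback \<open>loop_call b\<close> is never reached; it only keeps \<open>act b i\<close>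
  well-typed.\<close>

definition act :: "ty \<Rightarrow> nat \<Rightarrow> tm" where
  "act b i = (case \<tau> ! i of
      Call f v \<Rightarrow> if is_val v \<and> wt v (argty f) then
          Seq (Assign counter (IntT (int i + 2))) (Let (res_var (resty f)) (call_code f v) (after_call f b))
        else loop_call b
    | Ret m v \<Rightarrow> if is_val v \<and> wt v b then Seq (Assign counter (IntT (int i + 2))) (val_code v)
        else loop_call b)"

fun dispatch_from :: "ty \<Rightarrow> nat list \<Rightarrow> tm" where
  "dispatch_from b [] = loop_call b"
| "dispatch_from b (i # is) =
     If (BinOp Equal (Deref counter) (IntT (int i))) (act b i) (dispatch_from b is)"

definition dispatch :: "ty \<Rightarrow> tm" where
  "dispatch b = dispatch_from b (filter even [0..<length \<tau>])"

definition body :: "meth \<Rightarrow> tm" where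
  "body m = Seq (save_received (VarT (arg_var (argty m))) (received (argty m))) (loop_call (resty m))"

definition call_ctx :: "meth \<Rightarrow> ty \<Rightarrow> ectx" where
  "call_ctx f b = ESnd (EPairR UnitT (ELet (res_var (resty f)) Hole (after_call f b)))"

text \<open>A reference needs an initial value; the stub stored there is never called.\<close>

definition stub :: "meth \<Rightarrow> tm" where
  "stub d = App (Deref (ref_of d)) (VarT (arg_var (argty d)))"

definition client_decls :: "decl list" where
  "client_decls = map Abstract (list_of P0)
     @ map (\<lambda>m. PublicM m (arg_var (argty m)) (body m)) (list_of A0)
     @ map (\<lambda>m. PrivM m (arg_var (argty m)) (body m)) (list_of Priv)
     @ map (\<lambda>b. PrivM (loop_meth b) (arg_var TUnit) (dispatch b)) res_tys
     @ [RefInt counter 0]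
     @ map (\<lambda>d. RefLam (ref_of d) (arg_var (argty d)) (stub d)) (list_of Dyn)"

definition client :: client where
  "client = (client_decls, loop_call TUnit)"

lemma finite_Priv: "finite Priv"
  unfolding Priv_def using finite_trace_meths by auto

lemma finite_Dyn: "finite Dyn"
  unfolding Dyn_def using finite_trace_meths by auto

lemma set_res_tys: "set res_tys = insert TUnit (resty ` (A0 \<union> Priv))"
  and distinct_res_tys: "distinct res_tys"
  using list_of[of "insert TUnit (resty ` (A0 \<union> Priv))"] finite_A0 finite_Priv
  unfolding res_tys_def by auto

lemma Priv_ctx: "Priv \<subseteq> CtxN" and Priv_trace: "Priv \<subseteq> trace_meths \<tau>"
  and A0_Priv_disjoint: "A0 \<inter> Priv = {}"
  unfolding Priv_def by auto

lemma static_names_disjoint: "P0 \<inter> A0 = {}" "P0 \<inter> Priv = {}"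
  using lib_ctx_disjoint A0_ctx P0_lib Priv_ctx by blast+

lemma mnum_lt_K: "m \<in> A0 \<union> P0 \<union> trace_meths \<tau> \<Longrightarrow> mnum m < K"
  using K_bound by blast

lemma mnum_loop_meth [simp]: "mnum (loop_meth b) = K"
  and argty_loop_meth [simp]: "argty (loop_meth b) = TUnit"
  and resty_loop_meth [simp]: "resty (loop_meth b) = b"
  by (simp_all add: loop_meth_def)

lemma loop_meth_inj: "loop_meth b = loop_meth b' \<longleftrightarrow> b = b'"
  by (simp add: loop_meth_def)

lemma mnum_stub_meth [simp]: "mnum (stub_meth d) = K + 1 + mnum d"
  and argty_stub_meth [simp]: "argty (stub_meth d) = argty d"
  and resty_stub_meth [simp]: "resty (stub_meth d) = resty d"
  by (cases d; simp)+

lemma stub_meth_inj: "stub_meth d = stub_meth d' \<longleftrightarrow> d = d'"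
  by (cases d; cases d') auto

lemma refty_counter [simp]: "refty counter = TInt"
  and rnum_counter [simp]: "rnum counter = B"
  by (simp_all add: counter_def)

lemma refty_ref_of [simp]: "refty (ref_of d) = TArrow (argty d) (resty d)"
  and rnum_ref_of [simp]: "rnum (ref_of d) = B + 1 + mnum d"
  by (cases d; simp)+

lemma ref_of_inj: "ref_of d = ref_of d' \<longleftrightarrow> d = d'"
  by (cases d; cases d') auto

lemma ref_of_neq_counter [simp]: "ref_of d \<noteq> counter" "counter \<noteq> ref_of d"
  by (cases d; simp add: counter_def)+

lemma received_lookup:
  assumes "j < length \<tau>" "odd j" "wt (move_val (\<tau> ! j)) a"
  shows "map_of (received a) (Suc j) = Some (move_val (\<tau> ! j))"
proof -
  have "distinct (map fst (received a))"
    unfolding received_def by (simp add: distinct_map inj_on_def)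
  moreover have "(Suc j, move_val (\<tau> ! j)) \<in> set (received a)"
    unfolding received_def using assms by auto
  ultimately show ?thesis
    by (rule map_of_is_SomeI)
qed

lemma received_vals:
  assumes "(c, v) \<in> set (received a)"
  shows "wt v a \<and> meths v \<subseteq> trace_meths \<tau>"
proof -
  obtain j where "j < length \<tau>" "v = move_val (\<tau> ! j)" "wt v a"
    using assms unfolding received_def by auto
  then show ?thesis
    using nth_in_trace_meths(2) by blast
qed

lemma wt_counter_test: "wt (BinOp Equal (Deref counter) (IntT i)) TInt"
  by (auto intro: wt.intros wt_deref[of counter, simplified])

lemma wt_counter_assign: "wt (Assign counter (IntT i)) TUnit"
  by (rule wt_assign) (auto intro: wt_int)

lemma wt_Deref_ref_of: "wt (Deref (ref_of d)) (TArrow (argty d) (resty d))"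
  using wt_deref[of "ref_of d"] by simp

lemma val_code_wt: "wt v t \<Longrightarrow> wt (val_code v) t"
proof (induct v arbitrary: t)
  case (MethT d)
  then show ?case by (auto intro: wt_meth wt_deref[of "ref_of d", simplified])
qed (auto intro: wt.intros)

lemma save_code_wt: "wt p t \<Longrightarrow> wt v t \<Longrightarrow> wt (save_code p v) TUnit"
proof (induct v arbitrary: p t)
  case (MethT d)
  then show ?case by (auto intro: wt.intros)
next
  case (Pair a b)
  then obtain ta tb where "t = TProd ta tb" "wt a ta" "wt b tb"
    by auto
  then show ?case
    using Pair(1)[of "Fst p" ta] Pair(2)[of "Snd p" tb] Pair(3) by (auto intro: wt.intros)
qed (auto intro: wt.intros)

lemma save_received_wt: "wt p a \<Longrightarrow> wt (save_received p (received a)) TUnit"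
proof -
  have "wt (save_received p xs) TUnit" if "wt p a" "\<forall>(c, v)\<in>set xs. wt v a" for xs
    using that by (induct p xs rule: save_received.induct) (auto intro: wt.intros wt_counter_test save_code_wt)
  then show "wt p a \<Longrightarrow> ?thesis"
    using received_vals by blast
qed

lemma loop_call_wt: "wt (loop_call b) b"
  unfolding loop_call_def by (rule wt_app[where a = TUnit]) (auto simp: wt_MethT_iff intro: wt_unit)

lemma call_code_wt: "wt v (argty f) \<Longrightarrow> wt (call_code f v) (resty f)"
proof -
  assume v: "wt v (argty f)"
  let ?T = "TArrow (argty f) (resty f)"
  have "wt (App (MethT f) (val_code v)) (resty f)"
    using wt_meth[of f] val_code_wt[OF v] by (rule wt_app)
  moreover have "wt (Deref (ref_of f)) (varty (fun_var ?T))"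
    using wt_Deref_ref_of by simp
  then have "wt (Let (fun_var ?T) (Deref (ref_of f)) (App (VarT (fun_var ?T)) (val_code v))) (resty f)"
    using wt_var[of "fun_var ?T"] val_code_wt[OF v] by (intro wt_let wt_app) simp_all
  ultimately show ?thesis
    unfolding call_code_def by simp
qed

lemma after_call_wt: "wt (after_call f b) b"
proof -
  have "wt (save_received (VarT (res_var (resty f))) (received (resty f))) TUnit"
    using wt_var[of "res_var (resty f)"] by (intro save_received_wt) simp
  then show ?thesis
    unfolding after_call_def using loop_call_wt by (blast intro: wt_snd wt_pair)
qed

lemma act_wt: "wt (act b i) b"
  unfolding act_def
  by (auto split: move.split intro!: wt.intros wt_counter_assign call_code_wt after_call_wt
      val_code_wt loop_call_wt)

lemma dispatch_wt: "wt (dispatch b) b"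
proof -
  have "wt (dispatch_from b is) b" for "is"
    by (induct "is") (auto intro: wt.intros wt_counter_test act_wt loop_call_wt)
  then show ?thesis
    unfolding dispatch_def .
qed

lemma body_wt: "wt (body m) (resty m)"
proof -
  have "wt (save_received (VarT (arg_var (argty m))) (received (argty m))) TUnit"
    using wt_var[of "arg_var (argty m)"] by (intro save_received_wt) simp
  then show ?thesis
    unfolding body_def using loop_call_wt by (blast intro: wt_snd wt_pair)
qed

lemma stub_wt: "wt (stub d) (resty d)"
  unfolding stub_def using wt_var[of "arg_var (argty d)"] by (intro wt_app[OF wt_Deref_ref_of]) simp

definition client_code :: "var set \<Rightarrow> tm \<Rightarrow> bool" where
  "client_code V M \<longleftrightarrow> fv M \<subseteq> V \<and> \<not> has_box M \<and> \<not> has_assert M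
     \<and> meths M \<subseteq> Static \<union> loop_meth ` set res_tys \<and> refs M \<subseteq> insert counter (ref_of ` Dyn)"

lemma client_code_simps [simp]:
  "client_code V (IntT i)"
  "client_code V UnitT"
  "client_code V (VarT x) \<longleftrightarrow> x \<in> V"
  "client_code V (MethT m) \<longleftrightarrow> m \<in> Static \<union> loop_meth ` set res_tys"
  "client_code V (Deref r) \<longleftrightarrow> r \<in> insert counter (ref_of ` Dyn)"
  "client_code V (Assign r M) \<longleftrightarrow> r \<in> insert counter (ref_of ` Dyn) \<and> client_code V M"
  "client_code V (BinOp op M N) \<longleftrightarrow> client_code V M \<and> client_code V N"
  "client_code V (Pair M N) \<longleftrightarrow> client_code V M \<and> client_code V N"
  "client_code V (Fst M) \<longleftrightarrow> client_code V M"
  "client_code V (Snd M) \<longleftrightarrow> client_code V M"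
  "client_code V (App M N) \<longleftrightarrow> client_code V M \<and> client_code V N"
  "client_code V (If M N1 N0) \<longleftrightarrow> client_code V M \<and> client_code V N1 \<and> client_code V N0"
  "client_code V (Let x M N) \<longleftrightarrow> client_code V M \<and> client_code (insert x V) N"
  unfolding client_code_def by auto

lemma client_code_val_code: "is_val v \<Longrightarrow> meths v \<subseteq> trace_meths \<tau> \<Longrightarrow> client_code V (val_code v)"
  by (induct v) (auto simp: Dyn_def)

lemma client_code_save_code:
  "client_code V p \<Longrightarrow> meths v \<subseteq> trace_meths \<tau> \<Longrightarrow> client_code V (save_code p v)"
  by (induct v arbitrary: p) (auto simp: Dyn_def)

lemma client_code_save_received: "client_code V p \<Longrightarrow> client_code V (save_received p (received a))"
proof -
  have "client_code V (save_received p xs)"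
    if "client_code V p" "\<forall>(c, v) \<in> set xs. meths v \<subseteq> trace_meths \<tau>" for xs
    using that by (induct p xs rule: save_received.induct) (auto intro: client_code_save_code)
  then show "client_code V p \<Longrightarrow> ?thesis"
    using received_vals by blast
qed

lemma client_code_loop_call: "b \<in> set res_tys \<Longrightarrow> client_code V (loop_call b)"
  by (simp add: loop_call_def)

lemma client_code_call_code:
  "is_val v \<Longrightarrow> meths v \<subseteq> trace_meths \<tau> \<Longrightarrow> f \<in> trace_meths \<tau> \<Longrightarrow> client_code V (call_code f v)"
  by (auto simp: call_code_def Dyn_def fun_var_def intro: client_code_val_code)

lemma client_code_after_call:
  "res_var (resty f) \<in> V \<Longrightarrow> b \<in> set res_tys \<Longrightarrow> client_code V (after_call f b)"
  by (simp add: after_call_def client_code_save_received client_code_loop_call)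

lemma client_code_act: "i < length \<tau> \<Longrightarrow> b \<in> set res_tys \<Longrightarrow> client_code V (act b i)"
  using nth_in_trace_meths[of i \<tau>]
  by (auto simp: act_def split: move.split
      intro: client_code_call_code client_code_after_call client_code_val_code client_code_loop_call)

lemma client_code_dispatch: "b \<in> set res_tys \<Longrightarrow> client_code V (dispatch b)"
proof -
  assume b: "b \<in> set res_tys"
  have "client_code V (dispatch_from b is)" if "\<forall>i \<in> set is. i < length \<tau>" for "is"
    using that by (induct "is") (auto intro: client_code_act client_code_loop_call b)
  then show ?thesis
    unfolding dispatch_def by simp
qed

lemma client_code_body:
  "arg_var (argty m) \<in> V \<Longrightarrow> resty m \<in> set res_tys \<Longrightarrow> client_code V (body m)"
  by (simp add: body_def client_code_save_received client_code_loop_call)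

lemma client_code_stub: "d \<in> Dyn \<Longrightarrow> arg_var (argty d) \<in> V \<Longrightarrow> client_code V (stub d)"
  by (simp add: stub_def)

lemma subst_closed: "x \<notin> fv M \<Longrightarrow> subst x v M = M"
  by (induct M) auto

lemma subst_dispatch [simp]: "b \<in> set res_tys \<Longrightarrow> subst x u (dispatch b) = dispatch b"
  using client_code_dispatch[of b "{}"] subst_closed unfolding client_code_def by blast

lemma subst_val_code [simp]:
  "is_val v \<Longrightarrow> meths v \<subseteq> trace_meths \<tau> \<Longrightarrow> subst x u (val_code v) = val_code v"
  using client_code_val_code[of v "{}"] subst_closed unfolding client_code_def by blast

lemma subst_save_code: "subst x u (save_code p v) = save_code (subst x u p) v"
  by (induct v arbitrary: p) auto

lemma subst_save_received: "subst x u (save_received p xs) = save_received (subst x u p) xs"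
  by (induct p xs rule: save_received.induct) (auto simp: subst_save_code)

lemma subst_body:
  "subst (arg_var (argty m)) u (body m) = Seq (save_received u (received (argty m))) (loop_call (resty m))"
  unfolding body_def loop_call_def by (simp add: subst_save_received)

lemma subst_after_call:
  "subst (res_var (resty f)) u (after_call f b) = Seq (save_received u (received (resty f))) (loop_call b)"
  unfolding after_call_def loop_call_def by (simp add: subst_save_received)

fun save_upd :: "store \<Rightarrow> tm \<Rightarrow> store" where
  "save_upd S (MethT d) = (if d \<in> Static then S else S(ref_of d \<mapsto> MethT d))"
| "save_upd S (Pair a b) = save_upd (save_upd S a) b"
| "save_upd S t = S"

lemma save_upd_counter [simp]: "save_upd S v counter = S counter"
  by (induct v arbitrary: S) auto

lemma save_upd_ref_of:
  "is_val v \<Longrightarrow>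
     save_upd S v (ref_of d) = (if d \<in> meths v \<and> d \<notin> Static then Some (MethT d) else S (ref_of d))"
  by (induct v arbitrary: S) (auto simp: ref_of_inj)

lemma eval_val_code:
  "is_val v \<Longrightarrow> \<forall>d \<in> meths v. d \<notin> Static \<longrightarrow> S (ref_of d) = Some (MethT d) \<Longrightarrow>
    eval_simple S (val_code v) = Some (v, S)"
  by (induct v) auto

lemma eval_save_code:
  "\<forall>S. eval_simple S p = Some (v, S) \<Longrightarrow> eval_simple S (save_code p v) = Some (UnitT, save_upd S v)"
proof (induct v arbitrary: p S)
  case (Pair a b)
  then have "\<forall>S. eval_simple S (Fst p) = Some (a, S)" "\<forall>S. eval_simple S (Snd p) = Some (b, S)"
    by auto
  then show ?case
    using Pair(1,2) by simp
qed auto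

lemma eval_save_received:
  assumes "S counter = Some (IntT (int c))" "map_of xs c = Some v" "\<forall>S. eval_simple S p = Some (v, S)"
  shows "eval_simple S (save_received p xs) = Some (UnitT, save_upd S v)"
  using assms(2)
proof (induct xs)
  case (Cons x xs)
  then show ?case
    using assms(1,3) eval_save_code by (cases x) (auto split: if_splits)
qed simp

lemma dispatch_from_isteps:
  assumes "S counter = Some (IntT (int i))" "i \<in> set is" "ectx_ok E"
  shows "isteps (PC Es (fill E (dispatch_from b is)) R S P A k) (PC Es (fill E (act b i)) R S P A k)"
  using assms(2)
proof (induct "is")
  case (Cons j "is")
  let ?test = "BinOp Equal (Deref counter) (IntT (int j))"
  have "isteps (PC Es (fill E (If ?test (act b j) (dispatch_from b is))) R S P A k)
          (PC Es (fill E (If (IntT (if i = j then 1 else 0)) (act b j) (dispatch_from b is))) R S P A k)"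
    using eval_simple_isteps[of S ?test, where E = "ectx_comp E (EIf Hole (act b j) (dispatch_from b is))"]
      assms(1,3) by simp
  moreover have "isteps (PC Es (fill E (If (IntT 1) (act b j) (dispatch_from b is))) R S P A k)
                   (PC Es (fill E (act b j)) R S P A k)"
    "isteps (PC Es (fill E (If (IntT 0) (act b j) (dispatch_from b is))) R S P A k)
       (PC Es (fill E (dispatch_from b is)) R S P A k)"
    using assms(3) by (auto intro!: head_isteps h_if1 h_if0)
  ultimately show ?case
    using Cons by (cases "i = j") (auto intro: isteps_trans)
qed simp

lemma dispatch_isteps:
  assumes "S counter = Some (IntT (int i))" "i < length \<tau>" "even i" "ectx_ok E"
  shows "isteps (PC Es (fill E (dispatch b)) R S P A k) (PC Es (fill E (act b i)) R S P A k)"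
  unfolding dispatch_def using assms by (intro dispatch_from_isteps) auto


end

definition upd_list :: "('a \<Rightarrow> 'k) \<Rightarrow> ('a \<Rightarrow> 'v) \<Rightarrow> ('k \<rightharpoonup> 'v) \<Rightarrow> 'a list \<Rightarrow> 'k \<rightharpoonup> 'v" where
  "upd_list key val m xs = foldl (\<lambda>m x. m(key x \<mapsto> val x)) m xs"

lemma upd_list_Nil [simp]: "upd_list key val m [] = m"
  by (simp add: upd_list_def)

lemma upd_list_Cons [simp]: "upd_list key val m (x # xs) = upd_list key val (m(key x \<mapsto> val x)) xs"
  by (simp add: upd_list_def)

lemma upd_list_append: "upd_list key val m (xs @ ys) = upd_list key val (upd_list key val m xs) ys"
  by (simp add: upd_list_def)

lemma upd_list_other: "k \<notin> key ` set xs \<Longrightarrow> upd_list key val m xs k = m k"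
  by (induct xs arbitrary: m) auto

lemma upd_list_in: "inj_on key (set xs) \<Longrightarrow> x \<in> set xs \<Longrightarrow> upd_list key val m xs (key x) = Some (val x)"
proof (induct xs arbitrary: m)
  case (Cons y xs)
  show ?case
  proof (cases "x \<in> set xs")
    case False
    then have "x = y" "key x \<notin> key ` set xs"
      using Cons(2,3) by (auto simp: inj_on_def)
    then show ?thesis
      by (simp add: upd_list_other)
  qed (use Cons in auto)
qed simp

lemma dom_upd_list: "dom (upd_list key val m xs) = dom m \<union> key ` set xs"
  by (induct xs arbitrary: m) auto

context replay
begin

definition client_repo :: repo where
  "client_repo = upd_list stub_meth (\<lambda>d. (arg_var (argty d), stub d))
     (upd_list loop_meth (\<lambda>b. (arg_var TUnit, dispatch b))
        (upd_list (\<lambda>m. m) (\<lambda>m. (arg_var (argty m), body m)) Map.empty (list_of A0 @ list_of Priv))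
        res_tys)
     (list_of Dyn)"

definition client_store :: store where
  "client_store = upd_list ref_of (\<lambda>d. MethT (stub_meth d)) (Map.empty(counter \<mapsto> IntT 0)) (list_of Dyn)"

lemma set_list_of_A0: "set (list_of A0) = A0" and set_list_of_Priv: "set (list_of Priv) = Priv"
  and set_list_of_P0: "set (list_of P0) = P0" and set_list_of_Dyn: "set (list_of Dyn) = Dyn"
  using list_of finite_A0 finite_Priv finite_P0 finite_Dyn by blast+

lemma distinct_list_of: "distinct (list_of A0)" "distinct (list_of Priv)" "distinct (list_of P0)"
  "distinct (list_of Dyn)"
  using list_of finite_A0 finite_Priv finite_P0 finite_Dyn by blast+

lemma dom_client_repo: "dom client_repo = A0 \<union> Priv \<union> loop_meth ` set res_tys \<union> stub_meth ` Dyn"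
  unfolding client_repo_def by (auto simp: dom_upd_list set_list_of_A0 set_list_of_Priv set_list_of_Dyn)

lemma dom_client_store: "dom client_store = insert counter (ref_of ` Dyn)"
  unfolding client_store_def by (auto simp: dom_upd_list set_list_of_Dyn)

lemma client_store_counter: "client_store counter = Some (IntT 0)"
  unfolding client_store_def by (subst upd_list_other) auto

lemma not_loop_stub_meth: "mnum m < K \<Longrightarrow> m \<notin> loop_meth ` X \<and> m \<notin> stub_meth ` Y"
  by force

lemma client_repo_body:
  assumes "m \<in> A0 \<union> Priv"
  shows "client_repo m = Some (arg_var (argty m), body m)"
proof -
  have "mnum m < K"
    using assms Priv_trace mnum_lt_K by blast
  moreover have "upd_list (\<lambda>m. m) (\<lambda>m. (arg_var (argty m), body m)) Map.empty
      (list_of A0 @ list_of Priv) m = Some (arg_var (argty m), body m)"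
    using upd_list_in[of "\<lambda>m. m" "list_of A0 @ list_of Priv" m] assms
    by (simp add: set_list_of_A0 set_list_of_Priv)
  ultimately show ?thesis
    unfolding client_repo_def using not_loop_stub_meth by (simp add: upd_list_other)
qed

lemma client_repo_loop:
  assumes "b \<in> set res_tys"
  shows "client_repo (loop_meth b) = Some (arg_var TUnit, dispatch b)"
proof -
  have "loop_meth b \<notin> stub_meth ` set (list_of Dyn)"
    by (auto dest: arg_cong[where f = mnum])
  then show ?thesis
    unfolding client_repo_def using assms
    by (simp add: upd_list_other upd_list_in inj_on_def loop_meth_inj)
qed

lemma client_repo_trace_meths: "m \<in> dom client_repo \<Longrightarrow> m \<in> trace_meths \<tau> \<Longrightarrow> m \<in> A0 \<union> Priv"
  using mnum_lt_K not_loop_stub_meth unfolding dom_client_repo by blast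

lemma Priv_subset_dom_client_repo: "Priv \<subseteq> dom client_repo"
  unfolding dom_client_repo by blast

lemma loop_call_isteps:
  assumes "b \<in> set res_tys" "ectx_ok E"
  shows "isteps (PC Es (fill E (loop_call b)) client_repo S P A k)
           (PC Es (fill E (Box (dispatch b))) client_repo S P A (Suc k))"
proof -
  have "isteps (PC Es (fill E (App (MethT (loop_meth b)) UnitT)) client_repo S P A k)
          (PC Es (fill E (Box (subst (arg_var TUnit) UnitT (dispatch b)))) client_repo S P A (Suc k))"
    using assms client_repo_loop by (intro head_isteps h_call) auto
  then show ?thesis
    using assms unfolding loop_call_def by simp
qed

lemma call_code_isteps:
  assumes "is_val v" "meths v \<subseteq> trace_meths \<tau>"
    "\<forall>d \<in> insert f (meths v) - Static. S (ref_of d) = Some (MethT d)" "ectx_ok E"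
  shows "isteps (PC Es (fill E (call_code f v)) R S P A k) (PC Es (fill E (App (MethT f) v)) R S P A k)"
proof -
  have val: "eval_simple S (val_code v) = Some (v, S)"
    using assms(1,3) by (intro eval_val_code) auto
  then have call: "isteps (PC Es (fill E (App (MethT f) (val_code v))) R S P A k)
                     (PC Es (fill E (App (MethT f) v)) R S P A k)"
    using eval_simple_isteps[where E = "ectx_comp E (EApp f Hole)"] assms(4) by simp
  show ?thesis
  proof (cases "f \<in> Static")
    case True
    then show ?thesis
      unfolding call_code_def using call by simp
  next
    case False
    let ?g = "fun_var (TArrow (argty f) (resty f))"
    let ?N = "App (VarT ?g) (val_code v)"
    have "eval_simple S (Deref (ref_of f)) = Some (MethT f, S)"
      using False assms(3) by simp
    then have "isteps (PC Es (fill E (call_code f v)) R S P A k)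
                 (PC Es (fill E (Let ?g (MethT f) ?N)) R S P A k)"
      unfolding call_code_def using False assms(4)
        eval_simple_isteps[where E = "ectx_comp E (ELet ?g Hole ?N)"] by simp
    also have "isteps \<dots> (PC Es (fill E (subst ?g (MethT f) ?N)) R S P A k)"
      using assms(4) by (intro head_isteps h_let) auto
    also have "subst ?g (MethT f) ?N = App (MethT f) (val_code v)"
      using assms(1,2) by simp
    finally show ?thesis
      using call by (rule isteps_trans)
  qed
qed

subsection \<open>Replaying the trace\<close>

text \<open>\<open>b\<close> is the result type of the dispatcher that runs, or is resumed, next; calls of the
  client are suspended inside such a dispatcher.\<close>

fun stack_shape :: "ty \<Rightarrow> frame list \<Rightarrow> (nat \<times> meth) list \<Rightarrow> bool" where
  "stack_shape b [] [] \<longleftrightarrow> b = TUnit"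
| "stack_shape b (FNum m l # Es) ((j, m') # st) \<longleftrightarrow>
     odd j \<and> m' = m \<and> b = resty m \<and> b \<in> set res_tys \<and> (\<exists>b'. stack_shape b' Es st)"
| "stack_shape b (FCtx f E # Es) ((i, f') # st) \<longleftrightarrow>
     even i \<and> f' = f \<and> (\<exists>Eg. E = ectx_comp Eg (call_ctx f b) \<and> value_passing Eg) \<and> stack_shape b Es st"
| "stack_shape b _ _ = False"

lemma stack_shape_res_tys: "stack_shape b Es st \<Longrightarrow> b \<in> set res_tys"
  by (induct b Es st rule: stack_shape.induct) (auto simp: set_res_tys)

lemma stack_shape_odd:
  "stack_shape b Es ((j, m) # st) \<Longrightarrow> odd j \<Longrightarrow>
     \<exists>l Es'. Es = FNum m l # Es' \<and> b = resty m \<and> (\<exists>b'. stack_shape b' Es' st)"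
  by (cases Es; cases "hd Es") auto

lemma stack_shape_even:
  "stack_shape b Es ((i, f) # st) \<Longrightarrow> even i \<Longrightarrow>
     \<exists>Eg Es'. Es = FCtx f (ectx_comp Eg (call_ctx f b)) # Es' \<and> value_passing Eg \<and> stack_shape b Es' st"
  by (cases Es; cases "hd Es") auto

definition store_inv :: "nat \<Rightarrow> nat \<Rightarrow> store \<Rightarrow> bool" where
  "store_inv c n S \<longleftrightarrow> S counter = Some (IntT (int c))
     \<and> (\<forall>d \<in> disclosed odd (take n \<tau>) - Static. S (ref_of d) = Some (MethT d))"

definition names_inv :: "nat \<Rightarrow> meth set \<Rightarrow> meth set \<Rightarrow> bool" where
  "names_inv n Pc Ac \<longleftrightarrow> A0 \<union> (Priv \<inter> disclosed even (take n \<tau>)) \<subseteq> Pc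
     \<and> P0 \<union> (disclosed odd (take n \<tau>) - dom client_repo) \<subseteq> Ac"

text \<open>\<open>ready n\<close>: the client is about to play move \<open>n\<close> of \<open>\<tau>\<close> by running a dispatcher;
  \<open>waiting n\<close>: it waits for the library to play move \<open>n\<close>.\<close>

definition ready :: "nat \<Rightarrow> config \<Rightarrow> bool" where
  "ready n c \<longleftrightarrow> (\<exists>Es E b S Pc Ac.
     c = PC Es (fill E (dispatch b)) client_repo S Pc Ac (ctx_boxes E + stack_boxes Es)
     \<and> value_passing E \<and> stack_shape b Es (pending_calls (take n \<tau>)) \<and> store_inv n n S
     \<and> names_inv n Pc Ac)"

definition waiting :: "nat \<Rightarrow> config \<Rightarrow> bool" where
  "waiting n c \<longleftrightarrow> (\<exists>Es l S Pc Ac b. c = OC Es l client_repo S Pc Ac (stack_boxes Es)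
     \<and> stack_shape b Es (pending_calls (take n \<tau>)) \<and> store_inv (Suc n) n S \<and> names_inv n Pc Ac)"

lemma readyI:
  "value_passing E \<Longrightarrow> stack_shape b Es (pending_calls (take n \<tau>)) \<Longrightarrow> store_inv n n S \<Longrightarrow>
    names_inv n Pc Ac \<Longrightarrow> ready n (PC Es (fill E (dispatch b)) client_repo S Pc Ac (ctx_boxes E + stack_boxes Es))"
  unfolding ready_def by blast

lemma waitingI:
  "stack_shape b Es (pending_calls (take n \<tau>)) \<Longrightarrow> store_inv (Suc n) n S \<Longrightarrow> names_inv n Pc Ac \<Longrightarrow>
    waiting n (OC Es l client_repo S Pc Ac (stack_boxes Es))"
  unfolding waiting_def by blast

lemma store_inv_client_move:
  "n < length \<tau> \<Longrightarrow> even n \<Longrightarrow> store_inv c n S \<Longrightarrow>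
     store_inv (Suc (Suc n)) (Suc n) (S(counter \<mapsto> IntT (int n + 2)))"
  unfolding store_inv_def by (auto simp: take_Suc_conv_app_nth)

lemma store_inv_lib_move:
  assumes "n < length \<tau>" "odd n" "store_inv (Suc n) n S" "is_val (move_val (\<tau> ! n))"
  shows "store_inv (Suc n) (Suc n) (save_upd S (move_val (\<tau> ! n)))"
  using assms save_upd_ref_of[OF assms(4)] unfolding store_inv_def
  by (auto simp: take_Suc_conv_app_nth)

lemma names_inv_client_move:
  "n < length \<tau> \<Longrightarrow> even n \<Longrightarrow> names_inv n Pc Ac \<Longrightarrow>
     names_inv (Suc n) (Pc \<union> (meths (move_val (\<tau> ! n)) \<inter> dom client_repo)) Ac"
  using Priv_subset_dom_client_repo unfolding names_inv_def by (auto simp: take_Suc_conv_app_nth)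

lemma names_inv_lib_move:
  "n < length \<tau> \<Longrightarrow> odd n \<Longrightarrow> names_inv n Pc Ac \<Longrightarrow>
     names_inv (Suc n) Pc (Ac \<union> (meths (move_val (\<tau> ! n)) - dom client_repo))"
  unfolding names_inv_def by (auto simp: take_Suc_conv_app_nth)

text \<open>A dynamic name the client has to send was disclosed by the library, so it has been stored.\<close>

lemma sent_name_stored:
  assumes "store_inv c n S" "d \<in> trace_meths \<tau>" "d \<in> CtxN \<union> P0 \<union> disclosed odd (take n \<tau>)"
    "d \<notin> Static"
  shows "S (ref_of d) = Some (MethT d)"
  using assms unfolding store_inv_def Static_def Priv_def by blast

lemma received_names_public:
  assumes "meths u \<subseteq> LibN \<union> A0 \<union> disclosed even (take n \<tau>)" "meths u \<subseteq> trace_meths \<tau>"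
    "names_inv n Pc Ac"
  shows "meths u \<inter> dom client_repo \<subseteq> Pc"
proof
  fix d
  assume d: "d \<in> meths u \<inter> dom client_repo"
  then have "d \<in> A0 \<union> Priv"
    using assms(2) client_repo_trace_meths by blast
  moreover have "d \<notin> LibN" if "d \<in> Priv"
    using that Priv_ctx lib_ctx_disjoint by blast
  ultimately show "d \<in> Pc"
    using assms(1,3) d unfolding names_inv_def by blast
qed

lemma called_name_abstract:
  assumes "f \<in> P0 \<union> disclosed odd (take n \<tau>)" "f \<in> LibN" "f \<in> trace_meths \<tau>" "names_inv n Pc Ac"
  shows "f \<in> Ac"
proof -
  have "f \<notin> dom client_repo"
    using assms(2,3) client_repo_trace_meths A0_ctx Priv_ctx lib_ctx_disjoint by blast
  then show ?thesis
    using assms(1,4) unfolding names_inv_def by blast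
qed

lemma receive_ready:
  assumes n: "n < length \<tau>" "odd n" and u: "move_val (\<tau> ! n) = u" "is_val u" "wt u a"
    and S: "store_inv (Suc n) n S" and names: "names_inv (Suc n) Pc Ac"
    and E: "value_passing E" and b: "stack_shape b Es (pending_calls (take (Suc n) \<tau>))"
  shows "\<exists>c. isteps (PC Es (fill E (Seq (save_received u (received a)) (loop_call b))) client_repo S Pc Ac
                 (ctx_boxes E + stack_boxes Es)) c \<and> ready (Suc n) c"
proof -
  let ?k = "ctx_boxes E + stack_boxes Es"
  let ?S' = "save_upd S u"
  let ?E' = "ectx_comp E (ESnd (EPairR UnitT (EBox Hole)))"
  have ok: "ectx_ok E"
    using E by (rule value_passing_ectx_ok)
  have "S counter = Some (IntT (int (Suc n)))"
    using S by (simp add: store_inv_def)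
  moreover have "map_of (received a) (Suc n) = Some u"
    using received_lookup n u by simp
  ultimately have "eval_simple S (save_received u (received a)) = Some (UnitT, ?S')"
    using u by (intro eval_save_received) (auto simp: eval_simple_val)
  then have "isteps (PC Es (fill E (Seq (save_received u (received a)) (loop_call b))) client_repo S Pc Ac ?k)
               (PC Es (fill E (Seq UnitT (loop_call b))) client_repo ?S' Pc Ac ?k)"
    using eval_simple_isteps[where E = "ectx_comp E (ESnd (EPairL Hole (loop_call b)))"] ok by simp
  also have "isteps \<dots> (PC Es (fill ?E' (dispatch b)) client_repo ?S' Pc Ac (Suc ?k))"
    using loop_call_isteps[where E = "ectx_comp E (ESnd (EPairR UnitT Hole))"]
      stack_shape_res_tys[OF b] ok by simp
  finally show ?thesis
    using readyI[of ?E' b Es "Suc n" ?S'] E b store_inv_lib_move[OF n S] u names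
    by (auto simp: value_passing_ectx_comp)
qed


lemma replay_client_call:
  assumes n: "n < length \<tau>" "even n" "\<tau> ! n = Call f v" and c: "ready n c"
  shows "\<exists>c'. ctrace c [Call f v] c' \<and> waiting (Suc n) c'"
proof -
  obtain Es E b S Pc Ac where c_eq: "c = PC Es (fill E (dispatch b)) client_repo S Pc Ac
        (ctx_boxes E + stack_boxes Es)"
    and E: "value_passing E" and st: "stack_shape b Es (pending_calls (take n \<tau>))"
    and S: "store_inv n n S" and names: "names_inv n Pc Ac"
    using c unfolding ready_def by blast
  let ?k = "ctx_boxes E + stack_boxes Es"
  let ?S1 = "S(counter \<mapsto> IntT (int n + 2))"
  let ?E1 = "ectx_comp E (call_ctx f b)"
  have ok: "ectx_ok E"
    using E by (rule value_passing_ectx_ok)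
  from moves_ok[OF n(1)] n have f: "f \<in> P0 \<union> disclosed odd (take n \<tau>)" "f \<in> LibN"
    and v: "is_val v" "wt v (argty f)" "meths v \<subseteq> CtxN \<union> P0 \<union> disclosed odd (take n \<tau>)"
    unfolding lib_move_ok_def Let_def by auto
  have trace: "f \<in> trace_meths \<tau>" "meths v \<subseteq> trace_meths \<tau>"
    using nth_in_trace_meths[OF n(1)] n(3) by auto
  have "isteps c (PC Es (fill E (act b n)) client_repo S Pc Ac ?k)"
    unfolding c_eq using S n ok by (intro dispatch_isteps) (auto simp: store_inv_def)
  also have "act b n = Seq (Assign counter (IntT (int n + 2)))
                         (Let (res_var (resty f)) (call_code f v) (after_call f b))"
    unfolding act_def using n(3) v by simp
  also have "isteps (PC Es (fill E \<dots>) client_repo S Pc Ac ?k)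
               (PC Es (fill ?E1 (call_code f v)) client_repo ?S1 Pc Ac ?k)"
    using eval_simple_isteps[where E = "ectx_comp E (ESnd (EPairL Hole _))"] ok
    by (simp add: call_ctx_def)
  also have "isteps \<dots> (PC Es (fill ?E1 (App (MethT f) v)) client_repo ?S1 Pc Ac ?k)"
    using sent_name_stored[OF S] f v trace ok by (intro call_code_isteps) (auto simp: call_ctx_def)
  finally have steps: "isteps c (PC Es (fill ?E1 (App (MethT f) v)) client_repo ?S1 Pc Ac ?k)" .
  have "f \<in> Ac"
    using called_name_abstract[OF f trace(1) names] .
  then have "cstep (PC Es (fill ?E1 (App (MethT f) v)) client_repo ?S1 Pc Ac ?k) (Some (Call f v))
      (OC (FCtx f ?E1 # Es) 0 client_repo ?S1 (Pc \<union> (meths v \<inter> dom client_repo)) Ac ?k)"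
    using ok v by (intro c_pq) (auto simp: call_ctx_def)
  moreover have "waiting (Suc n)
      (OC (FCtx f ?E1 # Es) 0 client_repo ?S1 (Pc \<union> (meths v \<inter> dom client_repo)) Ac ?k)"
    using waitingI[of b "FCtx f ?E1 # Es" "Suc n"] st E n store_inv_client_move[OF n(1,2) S]
      names_inv_client_move[OF n(1,2) names]
    by (simp add: take_Suc_conv_app_nth call_ctx_def) blast
  ultimately show ?thesis
    using steps ctrace_single ct_refl by blast
qed

lemma replay_client_ret:
  assumes n: "n < length \<tau>" "even n" "\<tau> ! n = Ret m v" and c: "ready n c"
  shows "\<exists>c'. ctrace c [Ret m v] c' \<and> waiting (Suc n) c'"
proof -
  obtain Es E b S Pc Ac where c_eq: "c = PC Es (fill E (dispatch b)) client_repo S Pc Ac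
        (ctx_boxes E + stack_boxes Es)"
    and E: "value_passing E" and st: "stack_shape b Es (pending_calls (take n \<tau>))"
    and S: "store_inv n n S" and names: "names_inv n Pc Ac"
    using c unfolding ready_def by blast
  let ?S1 = "S(counter \<mapsto> IntT (int n + 2))"
  have ok: "ectx_ok E"
    using E by (rule value_passing_ectx_ok)
  from moves_ok[OF n(1)] n obtain j st' where pending: "pending_calls (take n \<tau>) = (j, m) # st'" "odd j"
    and v: "is_val v" "wt v (resty m)" "meths v \<subseteq> CtxN \<union> P0 \<union> disclosed odd (take n \<tau>)"
    unfolding lib_move_ok_def Let_def by auto
  obtain l Es' b' where Es: "Es = FNum m l # Es'" "b = resty m" "stack_shape b' Es' st'"
    using stack_shape_odd[OF st[unfolded pending(1)] pending(2)] by blast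
  have "eval_simple ?S1 (val_code v) = Some (v, ?S1)"
    using v(1) sent_name_stored[OF S] v nth_in_trace_meths(2)[OF n(1)] n(3)
    by (intro eval_val_code) auto
  then have "eval_simple S (act b n) = Some (v, ?S1)"
    unfolding act_def using n(3) v Es(2) by simp
  then have "isteps c (PC Es (fill E v) client_repo ?S1 Pc Ac (ctx_boxes E + stack_boxes Es))"
    unfolding c_eq using dispatch_isteps[OF _ n(1,2) ok] S eval_simple_isteps[OF _ ok]
    by (meson isteps_trans store_inv_def)
  also have "isteps \<dots> (PC Es v client_repo ?S1 Pc Ac (stack_boxes Es))"
    using value_passing_isteps[OF E v(1), where C = Hole] by simp
  finally have steps: "isteps c (PC Es v client_repo ?S1 Pc Ac (stack_boxes Es))" .
  have "cstep (PC Es v client_repo ?S1 Pc Ac (stack_boxes Es)) (Some (Ret m v))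
          (OC Es' l client_repo ?S1 (Pc \<union> (meths v \<inter> dom client_repo)) Ac (stack_boxes Es'))"
    unfolding Es(1) using v(1) c_pa by simp
  moreover have "waiting (Suc n) (OC Es' l client_repo ?S1 (Pc \<union> (meths v \<inter> dom client_repo)) Ac
      (stack_boxes Es'))"
    using waitingI[of b' Es' "Suc n"] Es pending n store_inv_client_move[OF n(1,2) S]
      names_inv_client_move[OF n(1,2) names]
    by (simp add: take_Suc_conv_app_nth)
  ultimately show ?thesis
    using steps ctrace_single ct_refl by blast
qed

lemma replay_lib_call:
  assumes n: "n < length \<tau>" "odd n" "\<tau> ! n = Call m u" and c: "waiting n c"
  shows "\<exists>c'. ctrace c [Call m u] c' \<and> ready (Suc n) c'"
proof -
  obtain Es l S Pc Ac b where c_eq: "c = OC Es l client_repo S Pc Ac (stack_boxes Es)"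
    and st: "stack_shape b Es (pending_calls (take n \<tau>))" and S: "store_inv (Suc n) n S"
    and names: "names_inv n Pc Ac"
    using c unfolding waiting_def by blast
  let ?Ac' = "Ac \<union> (meths u - dom client_repo)"
  let ?Es' = "FNum m (l + 1) # Es"
  from moves_ok[OF n(1)] n have m: "m \<in> A0 \<union> disclosed even (take n \<tau>)" "m \<in> CtxN"
    and u: "is_val u" "wt u (argty m)" "meths u \<subseteq> LibN \<union> A0 \<union> disclosed even (take n \<tau>)"
    unfolding lib_move_ok_def Let_def by auto
  have trace: "m \<in> trace_meths \<tau>" "meths u \<subseteq> trace_meths \<tau>"
    using nth_in_trace_meths[OF n(1)] n(3) by auto
  then have mA0: "m \<in> A0 \<union> Priv"
    using m unfolding Priv_def by blast
  then have "m \<in> Pc"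
    using m(1) names unfolding names_inv_def by blast
  moreover have "o_val client_repo Pc u (argty m)"
    unfolding o_val_def using u received_names_public[OF u(3) trace(2) names] by simp
  ultimately have "cstep c (Some (Call m u)) (PC ?Es' (App (MethT m) u) client_repo S Pc ?Ac' (stack_boxes Es))"
    unfolding c_eq using client_repo_body[OF mA0] by (intro c_oq) auto
  moreover have "isteps (PC ?Es' (App (MethT m) u) client_repo S Pc ?Ac' (stack_boxes Es))
      (PC ?Es' (fill (EBox Hole) (Seq (save_received u (received (argty m))) (loop_call (resty m))))
         client_repo S Pc ?Ac' (ctx_boxes (EBox Hole) + stack_boxes ?Es'))"
  proof -
    have "isteps (PC ?Es' (App (MethT m) u) client_repo S Pc ?Ac' (stack_boxes Es))
        (PC ?Es' (Box (subst (arg_var (argty m)) u (body m))) client_repo S Pc ?Ac' (Suc (stack_boxes Es)))"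
      using head_isteps[of Hole, OF _ h_call[of client_repo m, OF client_repo_body[OF mA0] u(1)]] by simp
    then show ?thesis
      by (simp add: subst_body)
  qed
  moreover obtain c' where "isteps (PC ?Es' (fill (EBox Hole) (Seq (save_received u (received (argty m)))
        (loop_call (resty m)))) client_repo S Pc ?Ac' (ctx_boxes (EBox Hole) + stack_boxes ?Es')) c'"
      "ready (Suc n) c'"
  proof -
    have "stack_shape (resty m) ?Es' (pending_calls (take (Suc n) \<tau>))"
      using st n mA0 by (auto simp: take_Suc_conv_app_nth set_res_tys)
    then show ?thesis
      using receive_ready[OF n(1,2) _ u(1,2) S names_inv_lib_move[OF n(1,2) names],
          where E = "EBox Hole" and b = "resty m" and Es = ?Es'] n(3) that by auto
  qed
  ultimately show ?thesis
    using ctrace_single ct_refl by (meson isteps_trans)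
qed

lemma replay_lib_ret:
  assumes n: "n < length \<tau>" "odd n" "\<tau> ! n = Ret f u" and c: "waiting n c"
  shows "\<exists>c'. ctrace c [Ret f u] c' \<and> ready (Suc n) c'"
proof -
  obtain Es l S Pc Ac b where c_eq: "c = OC Es l client_repo S Pc Ac (stack_boxes Es)"
    and st: "stack_shape b Es (pending_calls (take n \<tau>))" and S: "store_inv (Suc n) n S"
    and names: "names_inv n Pc Ac"
    using c unfolding waiting_def by blast
  let ?Ac' = "Ac \<union> (meths u - dom client_repo)"
  from moves_ok[OF n(1)] n obtain i st' where pending: "pending_calls (take n \<tau>) = (i, f) # st'" "even i"
    and u: "is_val u" "wt u (resty f)" "meths u \<subseteq> LibN \<union> A0 \<union> disclosed even (take n \<tau>)"
    unfolding lib_move_ok_def Let_def by auto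
  obtain Eg Es' where Es: "Es = FCtx f (ectx_comp Eg (call_ctx f b)) # Es'" "value_passing Eg"
    "stack_shape b Es' st'"
    using stack_shape_even[OF st[unfolded pending(1)] pending(2)] by blast
  let ?E = "ectx_comp Eg (ESnd (EPairR UnitT Hole))"
  have "o_val client_repo Pc u (resty f)"
    unfolding o_val_def using u received_names_public[OF u(3) _ names] nth_in_trace_meths(2)[OF n(1)] n(3)
    by simp
  then have "cstep c (Some (Ret f u)) (PC Es' (fill (ectx_comp Eg (call_ctx f b)) u) client_repo S Pc ?Ac'
      (stack_boxes Es))"
    unfolding c_eq Es(1) by (rule c_oa)
  moreover have "isteps (PC Es' (fill (ectx_comp Eg (call_ctx f b)) u) client_repo S Pc ?Ac' (stack_boxes Es))
      (PC Es' (fill ?E (Seq (save_received u (received (resty f))) (loop_call b))) client_repo S Pc ?Ac'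
         (ctx_boxes ?E + stack_boxes Es'))"
  proof -
    have "isteps (PC Es' (fill ?E (Let (res_var (resty f)) u (after_call f b))) client_repo S Pc ?Ac'
        (stack_boxes Es)) (PC Es' (fill ?E (subst (res_var (resty f)) u (after_call f b))) client_repo S
        Pc ?Ac' (stack_boxes Es))"
      using value_passing_ectx_ok[OF Es(2)] u(1) by (intro head_isteps h_let) auto
    then show ?thesis
      using Es(1) by (simp add: call_ctx_def subst_after_call)
  qed
  moreover obtain c' where "isteps (PC Es' (fill ?E (Seq (save_received u (received (resty f)))
        (loop_call b))) client_repo S Pc ?Ac' (ctx_boxes ?E + stack_boxes Es')) c'" "ready (Suc n) c'"
  proof -
    have "stack_shape b Es' (pending_calls (take (Suc n) \<tau>))"
      using Es(3) pending n by (simp add: take_Suc_conv_app_nth)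
    moreover have "value_passing ?E"
      using Es(2) by (simp add: value_passing_ectx_comp)
    ultimately show ?thesis
      using receive_ready[OF n(1,2) _ u(1,2) S names_inv_lib_move[OF n(1,2) names],
          where E = ?E and b = b and Es = Es'] n(3) that by auto
  qed
  ultimately show ?thesis
    using ctrace_single ct_refl by (meson isteps_trans)
qed

lemma replay_prefix:
  assumes "S (counter) = Some (IntT 0)" "A0 \<subseteq> Pc" "P0 \<subseteq> Ac" "n \<le> length \<tau>"
  shows "\<exists>c. ctrace (PC [] (loop_call TUnit) client_repo S Pc Ac 0) (take n \<tau>) c
           \<and> (if even n then ready n c else waiting n c)"
  using assms(4)
proof (induct n)
  case 0
  have "isteps (PC [] (loop_call TUnit) client_repo S Pc Ac 0)
          (PC [] (fill (EBox Hole) (dispatch TUnit)) client_repo S Pc Ac (ctx_boxes (EBox Hole) + stack_boxes []))"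
    using loop_call_isteps[of TUnit Hole] by (simp add: set_res_tys)
  moreover have "ready 0 (PC [] (fill (EBox Hole) (dispatch TUnit)) client_repo S Pc Ac
      (ctx_boxes (EBox Hole) + stack_boxes []))"
    using assms(1-3) by (intro readyI) (auto simp: store_inv_def names_inv_def)
  ultimately show ?case
    by auto
next
  case (Suc n)
  then obtain c where c: "ctrace (PC [] (loop_call TUnit) client_repo S Pc Ac 0) (take n \<tau>) c"
    "if even n then ready n c else waiting n c"
    by auto
  have n: "n < length \<tau>"
    using Suc by simp
  obtain c' where c': "ctrace c [\<tau> ! n] c'"
    "if even (Suc n) then ready (Suc n) c' else waiting (Suc n) c'"
    using c(2) replay_client_call[OF n] replay_client_ret[OF n] replay_lib_call[OF n] replay_lib_ret[OF n]
    by (cases "\<tau> ! n"; cases "even n") auto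
  have "ctrace (PC [] (loop_call TUnit) client_repo S Pc Ac 0) (take (Suc n) \<tau>) c'"
    using ctrace_append[OF c(1) c'(1)] n by (simp add: take_Suc_conv_app_nth)
  then show ?case
    using c'(2) by blast
qed


end

subsection \<open>Building the client\<close>

lemma builds_map_Abstract:
  "builds N ds R S P (A \<union> set ms) res \<Longrightarrow> builds N (map Abstract ms @ ds) R S P A res"
proof (induct ms arbitrary: A)
  case (Cons m ms)
  then show ?case
    by (auto intro: b_abs simp: insert_commute)
qed simp

lemma builds_map_PublicM:
  "builds N ds (upd_list (\<lambda>m. m) (\<lambda>m. (x m, M m)) R ms) S (P \<union> set ms) A res \<Longrightarrow>
     builds N (map (\<lambda>m. PublicM m (x m) (M m)) ms @ ds) R S P A res"
proof (induct ms arbitrary: R P)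
  case (Cons m ms)
  have "builds N (map (\<lambda>m. PublicM m (x m) (M m)) ms @ ds) (R(m \<mapsto> (x m, M m))) S (insert m P) A res"
    using Cons(2) by (intro Cons(1)) (simp add: fun_upd_def)
  then show ?case
    by (simp add: b_pub)
qed simp

lemma builds_map_PrivM:
  "builds N ds (upd_list key (\<lambda>m. (x m, M m)) R ms) S P A res \<Longrightarrow>
     builds N (map (\<lambda>m. PrivM (key m) (x m) (M m)) ms @ ds) R S P A res"
proof (induct ms arbitrary: R)
  case (Cons m ms)
  then show ?case
    by (auto intro: b_priv)
qed simp

lemma builds_map_RefLam:
  assumes "\<forall>d \<in> set ds0. key d \<notin> dom R \<and> key d \<notin> N \<and> refty (r d) = TArrow (argty (key d)) (resty (key d))"
    and "distinct (map key ds0)"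
    and "builds N ds (upd_list key (\<lambda>d. (x d, M d)) R ds0) (upd_list r (\<lambda>d. MethT (key d)) S ds0) P A res"
  shows "builds N (map (\<lambda>d. RefLam (r d) (x d) (M d)) ds0 @ ds) R S P A res"
  using assms
proof (induct ds0 arbitrary: R S)
  case (Cons d ds0)
  have "\<forall>d' \<in> set ds0. key d' \<notin> dom (R(key d \<mapsto> (x d, M d))) \<and> key d' \<notin> N
      \<and> refty (r d') = TArrow (argty (key d')) (resty (key d'))"
    using Cons(2,3) by (fastforce simp: image_iff)
  then have "builds N (map (\<lambda>d. RefLam (r d) (x d) (M d)) ds0 @ ds) (R(key d \<mapsto> (x d, M d)))
      (S(r d \<mapsto> MethT (key d))) P A res"
    using Cons(3,4) by (intro Cons(1)) (auto simp: fun_upd_def)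
  then show ?case
    using Cons(2) by (auto intro!: b_reflam)
qed simp

lemma sem_clientI:
  "client_builds C M R S P A \<Longrightarrow> ctrace (PC [] M R S P A 0) \<tau> \<rho> \<Longrightarrow> (\<tau>, \<rho>) \<in> sem_client C"
  unfolding sem_client_def by (simp, intro exI conjI; assumption)

lemma compatibleI:
  "lib_builds L R S P A \<Longrightarrow> client_builds C M R' S' A P \<Longrightarrow> dom S \<inter> dom S' = {} \<Longrightarrow>
     dom R \<inter> dom R' = {} \<Longrightarrow> compatible L C"
  unfolding compatible_def by (intro exI conjI) (assumption | rule refl)+

lemma concat_map_Nil [simp]: "concat (map (\<lambda>x. []) xs) = []"
  by (induct xs) auto

context replay
begin

lemma defined_meths_client_decls:
  "defined_meths client_decls = list_of A0 @ list_of Priv @ map loop_meth res_tys"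
  unfolding client_decls_def defined_meths_def by (simp add: comp_def)

lemma abstract_meths_client_decls: "abstract_meths client_decls = list_of P0"
  unfolding client_decls_def abstract_meths_def by (simp add: comp_def)

lemma defined_refs_client_decls: "defined_refs client_decls = counter # map ref_of (list_of Dyn)"
  unfolding client_decls_def defined_refs_def by (simp add: comp_def)

lemma lib_terms_client_decls:
  "set (lib_terms client_decls) = (\<lambda>m. Lam (arg_var (argty m)) (body m)) ` (A0 \<union> Priv)
     \<union> (\<lambda>b. Lam (arg_var TUnit) (dispatch b)) ` set res_tys
     \<union> (\<lambda>d. Lam (arg_var (argty d)) (stub d)) ` Dyn"
  unfolding client_decls_def lib_terms_def
  by (auto simp: comp_def set_list_of_A0 set_list_of_Priv set_list_of_Dyn)

lemma client_lib_terms_code: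
  assumes "M \<in> set (lib_terms client_decls)"
  shows "\<exists>x N. M = Lam x N \<and> client_code {x} N"
proof -
  have "client_code {arg_var (argty m)} (body m)" if "m \<in> A0 \<union> Priv" for m
    using that by (intro client_code_body) (auto simp: set_res_tys)
  moreover have "client_code {arg_var (argty d)} (stub d)" if "d \<in> Dyn" for d
    using that by (intro client_code_stub) auto
  ultimately show ?thesis
    using assms client_code_dispatch unfolding lib_terms_client_decls by blast
qed

lemma client_names_le_K: "m \<in> prog_names client_decls \<union> meths (loop_call TUnit) \<Longrightarrow> mnum m \<le> K"
proof -
  have "mnum m \<le> K" if "m \<in> Static \<union> loop_meth ` UNIV" for m
    using that mnum_lt_K Priv_trace unfolding Static_def by fastforce
  moreover have "\<Union> (meths ` set (lib_terms client_decls)) \<subseteq> Static \<union> loop_meth ` UNIV"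
    using client_lib_terms_code unfolding client_code_def by fastforce
  moreover have "set (defined_meths client_decls) \<union> set (abstract_meths client_decls)
      \<subseteq> Static \<union> loop_meth ` UNIV"
    unfolding defined_meths_client_decls abstract_meths_client_decls Static_def
    by (auto simp: set_list_of_A0 set_list_of_Priv set_list_of_P0)
  ultimately show "m \<in> prog_names client_decls \<union> meths (loop_call TUnit) \<Longrightarrow> mnum m \<le> K"
    unfolding prog_names_def loop_call_def by auto
qed

lemma client_builds: "client_builds client (loop_call TUnit) client_repo client_store A0 P0"
proof -
  let ?N = "prog_names client_decls \<union> meths (loop_call TUnit)"
  let ?R1 = "upd_list (\<lambda>m. m) (\<lambda>m. (arg_var (argty m), body m)) Map.empty (list_of A0)"
  let ?R2 = "upd_list (\<lambda>m. m) (\<lambda>m. (arg_var (argty m), body m)) ?R1 (list_of Priv)"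
  let ?R3 = "upd_list loop_meth (\<lambda>b. (arg_var TUnit, dispatch b)) ?R2 res_tys"
  have "dom ?R3 = A0 \<union> Priv \<union> loop_meth ` set res_tys"
    by (simp add: dom_upd_list set_list_of_A0 set_list_of_Priv)
  then have "mnum m \<le> K" if "m \<in> dom ?R3" for m
  proof -
    have "m \<in> A0 \<union> Priv \<union> loop_meth ` set res_tys"
      using that \<open>dom ?R3 = _\<close> by blast
    then show ?thesis
      using mnum_lt_K Priv_trace by fastforce
  qed
  then have "stub_meth d \<notin> dom ?R3 \<union> ?N" for d
    using client_names_le_K[of "stub_meth d"] by fastforce
  then have "\<forall>d \<in> set (list_of Dyn). stub_meth d \<notin> dom ?R3 \<and> stub_meth d \<notin> ?N
      \<and> refty (ref_of d) = TArrow (argty (stub_meth d)) (resty (stub_meth d))"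
    by simp
  moreover have "distinct (map stub_meth (list_of Dyn))"
    using distinct_list_of by (simp add: distinct_map inj_on_def stub_meth_inj)
  moreover have "builds ?N [] client_repo client_store A0 P0 (client_repo, client_store, A0, P0)"
    by (rule b_nil)
  ultimately have "builds ?N (map (\<lambda>d. RefLam (ref_of d) (arg_var (argty d)) (stub d)) (list_of Dyn) @ [])
      ?R3 (Map.empty(counter \<mapsto> IntT 0)) A0 P0 (client_repo, client_store, A0, P0)"
    unfolding client_repo_def client_store_def upd_list_append by (rule builds_map_RefLam)
  then have "builds ?N (map (\<lambda>b. PrivM (loop_meth b) (arg_var TUnit) (dispatch b)) res_tys
      @ [RefInt counter 0] @ map (\<lambda>d. RefLam (ref_of d) (arg_var (argty d)) (stub d)) (list_of Dyn))
      ?R2 Map.empty A0 P0 (client_repo, client_store, A0, P0)"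
    by (intro builds_map_PrivM) (auto intro: b_refint)
  then have "builds ?N (map (\<lambda>m. PrivM m (arg_var (argty m)) (body m)) (list_of Priv) @
      map (\<lambda>b. PrivM (loop_meth b) (arg_var TUnit) (dispatch b)) res_tys
      @ [RefInt counter 0] @ map (\<lambda>d. RefLam (ref_of d) (arg_var (argty d)) (stub d)) (list_of Dyn))
      ?R1 Map.empty A0 P0 (client_repo, client_store, A0, P0)"
    using builds_map_PrivM[where key = "\<lambda>m. m"] by simp
  then have "builds ?N (drop (length (list_of P0)) client_decls) Map.empty Map.empty {} P0
      (client_repo, client_store, A0, P0)"
    unfolding client_decls_def using builds_map_PublicM set_list_of_A0 by simp
  then have "builds ?N client_decls Map.empty Map.empty {} {} (client_repo, client_store, A0, P0)"
    unfolding client_decls_def using builds_map_Abstract set_list_of_P0 by simp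
  then show ?thesis
    unfolding client_def by simp
qed

lemma wt_Lam_arg_var: "wt M b \<Longrightarrow> wt (Lam (arg_var a) M) (TArrow a b)"
  using wt_lam[of M b "arg_var a"] by simp

lemma wf_library_client_decls: "wf_library client_decls"
proof -
  have loop_names: "loop_meth b \<notin> A0 \<union> P0 \<union> Priv" for b
    using mnum_lt_K[of "loop_meth b"] Priv_trace by auto
  have "distinct (defined_meths client_decls)"
    unfolding defined_meths_client_decls using distinct_list_of A0_Priv_disjoint loop_names
    by (auto simp: distinct_map inj_on_def loop_meth_inj distinct_res_tys set_list_of_A0 set_list_of_Priv)
  moreover have "distinct (defined_refs client_decls)"
    unfolding defined_refs_client_decls using distinct_list_of
    by (auto simp: distinct_map inj_on_def ref_of_inj)
  moreover have "set (abstract_meths client_decls) \<inter> set (defined_meths client_decls) = {}"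
    unfolding defined_meths_client_decls abstract_meths_client_decls using static_names_disjoint loop_names
    by (auto simp: set_list_of_A0 set_list_of_Priv set_list_of_P0)
  moreover have "\<forall>d \<in> set client_decls. decl_typed d"
    using wt_Lam_arg_var[OF body_wt] wt_Lam_arg_var[OF dispatch_wt] wt_Lam_arg_var[OF stub_wt]
    unfolding client_decls_def by auto
  moreover have "\<forall>r \<in> set (defined_refs client_decls). \<not> is_prod (refty r)"
    by (simp add: defined_refs_client_decls)
  moreover have "\<forall>M \<in> set (lib_terms client_decls). source_term M
      \<and> meths M \<subseteq> set (defined_meths client_decls) \<union> set (abstract_meths client_decls)
      \<and> refs M \<subseteq> set (defined_refs client_decls)"
  proof
    fix M
    assume "M \<in> set (lib_terms client_decls)"
    then obtain x N where "M = Lam x N" "client_code {x} N"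
      using client_lib_terms_code by blast
    moreover have "set (defined_meths client_decls) \<union> set (abstract_meths client_decls)
        = Static \<union> loop_meth ` set res_tys"
      unfolding defined_meths_client_decls abstract_meths_client_decls Static_def
      by (auto simp: set_list_of_A0 set_list_of_Priv set_list_of_P0)
    moreover have "set (defined_refs client_decls) = insert counter (ref_of ` Dyn)"
      unfolding defined_refs_client_decls by (simp add: set_list_of_Dyn)
    ultimately show "source_term M
        \<and> meths M \<subseteq> set (defined_meths client_decls) \<union> set (abstract_meths client_decls)
        \<and> refs M \<subseteq> set (defined_refs client_decls)"
      unfolding source_term_def client_code_def by auto
  qed
  moreover have "\<exists>ms B. client_decls = map Abstract ms @ B \<and> (\<forall>d\<in>set B. \<not> is_abstract d)"
    unfolding client_decls_def by (intro exI[of _ "list_of P0"]) auto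
  ultimately show ?thesis
    unfolding wf_library_def by blast
qed

lemma wf_client: "wf_client client"
proof -
  have "client_code {} (loop_call TUnit)"
    by (simp add: client_code_loop_call set_res_tys)
  moreover have "Static \<union> loop_meth ` set res_tys
      = set (defined_meths client_decls) \<union> set (abstract_meths client_decls)"
    unfolding defined_meths_client_decls abstract_meths_client_decls Static_def
    by (auto simp: set_list_of_A0 set_list_of_Priv set_list_of_P0)
  ultimately show ?thesis
    unfolding client_def using wf_library_client_decls loop_call_wt
    by (auto simp: client_code_def source_term_def defined_refs_client_decls set_list_of_Dyn)
qed

lemma good_client: "good_client client"
  using client_lib_terms_code unfolding client_def by (fastforce simp: client_code_def loop_call_def)

lemma client_compatible:
  assumes "lib_builds L R0 S0 P0 A0" "dom R0 \<subseteq> LibN" "\<forall>m \<in> dom R0. mnum m < K"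
    "\<forall>r \<in> dom S0. rnum r < B"
  shows "compatible L client"
proof (rule compatibleI[OF assms(1) client_builds])
  have "B \<le> rnum r" if "r \<in> dom client_store" for r
    using that unfolding dom_client_store by auto
  then show "dom S0 \<inter> dom client_store = {}"
    using assms(4) by (metis disjoint_iff leD)
  have "m \<notin> dom client_repo" if "m \<in> dom R0" for m
  proof -
    have "m \<in> LibN" "mnum m < K"
      using that assms(2,3) by auto
    then show ?thesis
      using A0_ctx Priv_ctx lib_ctx_disjoint unfolding dom_client_repo by auto
  qed
  then show "dom R0 \<inter> dom client_repo = {}"
    by blast
qed

lemma client_replays_trace: "\<exists>\<rho>'. (\<tau>, \<rho>') \<in> sem_client client"
proof -
  obtain c where "ctrace (PC [] (loop_call TUnit) client_repo client_store A0 P0 0) (take (length \<tau>) \<tau>) c"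
    using replay_prefix[of client_store A0 P0 "length \<tau>", OF client_store_counter] by auto
  then have "(\<tau>, c) \<in> sem_client client"
    using sem_clientI[OF client_builds] by simp
  then show ?thesis ..
qed

end

theorem mainTheorem4:
  fixes L :: library and \<tau> :: "move list" and \<rho> :: config
  assumes "wf_library L"
    and "(\<tau>, \<rho>) \<in> sem_lib L"
  shows "\<exists>C. wf_client C \<and> good_client C \<and> compatible L C \<and> (\<exists>\<rho>'. (\<tau>, \<rho>') \<in> sem_client C)"
proof -
  obtain R0 S0 P0 A0 where build: "lib_builds L R0 S0 P0 A0"
    and trace: "ctrace (OC [] 0 R0 S0 P0 A0 0) \<tau> \<rho>"
    using assms(2) unfolding sem_lib_def by auto
  obtain LibN CtxN where moves: "dom R0 \<subseteq> LibN" "A0 \<subseteq> CtxN" "LibN \<inter> CtxN = {}"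
    "\<And>n. n < length \<tau> \<Longrightarrow> lib_move_ok P0 A0 LibN CtxN \<tau> n"
    using lib_trace_moves_ok[OF assms(1) build trace] by blast
  have lib: "P0 \<subseteq> dom R0" "finite P0" "finite A0" "finite (dom R0)" "finite (dom S0)"
    using lib_builds_props[OF assms(1) build] by auto
  have "finite (mnum ` (A0 \<union> P0 \<union> trace_meths \<tau> \<union> dom R0))"
    using lib finite_trace_meths by simp
  then obtain K where K: "\<forall>k \<in> mnum ` (A0 \<union> P0 \<union> trace_meths \<tau> \<union> dom R0). k < K"
    unfolding finite_nat_set_iff_bounded ..
  have "finite (rnum ` dom S0)"
    using lib by simp
  then obtain B where B: "\<forall>k \<in> rnum ` dom S0. k < B"
    unfolding finite_nat_set_iff_bounded ..
  interpret replay \<tau> P0 A0 LibN CtxN K B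
    using moves lib K by unfold_locales auto
  have "\<forall>m \<in> dom R0. mnum m < K" "\<forall>r \<in> dom S0. rnum r < B"
    using K B by simp_all
  then have "compatible L client"
    by (rule client_compatible[OF build moves(1)])
  then show ?thesis
    using wf_client good_client client_replays_trace by (intro exI[of _ client] conjI)
qed

end
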